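(* Let $d\ge3$, $F \leq F' \leq \mathrm{Sym}(\Omega)$ with $F$ semi-regular and $F'$ preserving each $F$-orbit, and let $n = [F':F]$. Fix a vertex $v_0$ of $T_d$. Then the stabilizer $K(F,F')$ of $v_0$ in $G(F,F')$ embeds as a cocompact lattice in the group $H_{n,d} = \mathfrak{S}_n^{V_d,\mathfrak{S}_{n-1}} \rtimes K_d$, where $K_d$ is the stabilizer of $v_0$ in $\mathrm{Aut}(T_d)$.
   Context: $\Omega$ is a set with $|\Omega|=d$; $T_d$ is the $d$-regular tree with vertex set $V_d$ and a coloring $c$ of its edges by $\Omega$ bijective on the edges at each vertex; local permutations $\sigma(g,v) = c|_{E(gv)}\circ g\circ (c|_{E(v)})^{-1}$. $G(F,F')$ is the (discrete, since $F$ is semi-regular) group of automorphisms of $T_d$ whose local permutations all lie in $F'$ and all but finitely many lie in $F$. A permutation group is semi-regular if point stabilizers are trivial. $\Sigma_n=\{0,\ldots,n-1\}$, $\mathfrak S_n=\mathrm{Sym}(\Sigma_n)$, $\mathfrak S_{n-1}$ the stabilizer of $0$; $\mathfrak{S}_n^{V_d,\mathfrak{S}_{n-1}}$ is the group of $(\sigma_v)_{v\in V_d}$ with $\sigma_v\in\mathfrak S_{n-1}$ for all but finitely many $v$, topologized so that the product group $\mathfrak{S}_{n-1}^{V_d}$ is a compact open subgroup; $H_{n,d}$ is the open subgroup of $G_{n,d}=\mathfrak{S}_n^{V_d,\mathfrak{S}_{n-1}}\rtimes\mathrm{Aut}(T_d)$ consisting of elements whose $\mathrm{Aut}(T_d)$-component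 fixes $v_0$. *)

theory Defs
  imports "HOL-Algebra.Algebra" "HOL-Analysis.Analysis"
begin

section \<open>The d-regular tree T_d with its legal colouring, Omega = the finite type 'a, d = CARD('a)\<close>

text \<open>Vertices of T_d: reduced words over Omega (no two consecutive letters equal).
  The neighbour of w along the edge of colour a is nbr a w; the edge {w, nbr a w}
  has colour a.\<close>

definition tree_vertices :: "'a list set" where
  "tree_vertices = {w. \<forall>i. Suc i < length w \<longrightarrow> w ! i \<noteq> w ! Suc i}"

definition nbr :: "'a \<Rightarrow> 'a list \<Rightarrow> 'a list" where
  "nbr a w = (if w \<noteq> [] \<and> hd w = a then tl w else a # w)"

definition tree_adj :: "'a list \<Rightarrow> 'a list \<Rightarrow> bool" where
  "tree_adj v w \<longleftrightarrow> (\<exists>a. w = nbr a v)"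

definition tree_aut :: "('a list \<Rightarrow> 'a list) set" where
  "tree_aut = {g. bij_betw g tree_vertices tree_vertices
      \<and> (\<forall>v\<in>tree_vertices. \<forall>w\<in>tree_vertices. tree_adj v w \<longleftrightarrow> tree_adj (g v) (g w))
      \<and> (\<forall>v. v \<notin> tree_vertices \<longrightarrow> g v = v)}"

text \<open>Local permutation sigma(g,v) = c|E(gv) o g o (c|E(v))^-1 : the colour of
  the edge g({v, nbr a v}) at g v.\<close>

definition local_perm :: "('a list \<Rightarrow> 'a list) \<Rightarrow> 'a list \<Rightarrow> 'a \<Rightarrow> 'a" where
  "local_perm g v a = (THE b. g (nbr a v) = nbr b (g v))"

text \<open>Sym(Omega) is BijGroup UNIV; permutation groups are subgroups of it.\<close>

definition semiregular :: "('a \<Rightarrow> 'a) set \<Rightarrow> bool" where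
  "semiregular F \<longleftrightarrow> (\<forall>f\<in>F. \<forall>x. f x = x \<longrightarrow> f = id)"

definition preserves_orbits :: "('a \<Rightarrow> 'a) set \<Rightarrow> ('a \<Rightarrow> 'a) set \<Rightarrow> bool" where
  "preserves_orbits F' F \<longleftrightarrow> (\<forall>f'\<in>F'. \<forall>x. f' x \<in> {f x | f. f \<in> F})"

definition GFF :: "('a \<Rightarrow> 'a) set \<Rightarrow> ('a \<Rightarrow> 'a) set \<Rightarrow> ('a list \<Rightarrow> 'a list) set" where
  "GFF F F' = {g \<in> tree_aut. (\<forall>v\<in>tree_vertices. local_perm g v \<in> F')
      \<and> finite {v \<in> tree_vertices. local_perm g v \<notin> F}}"

definition KFF_group :: "('a \<Rightarrow> 'a) set \<Rightarrow> ('a \<Rightarrow> 'a) set \<Rightarrow> 'a list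
    \<Rightarrow> ('a list \<Rightarrow> 'a list) monoid" where
  "KFF_group F F' v0 = \<lparr>carrier = {g \<in> GFF F F'. g v0 = v0}, Group.monoid.mult = (\<circ>), one = id\<rparr>"

text \<open>An element is a pair (sigma, g): sigma v is a permutation of Sigma_n = {0..<n}
  (identity for v outside the vertex set), sigma v fixes 0 for all but finitely many
  vertices v, and g is a tree automorphism fixing v0.\<close>

definition H_carrier :: "nat \<Rightarrow> 'a list \<Rightarrow> (('a list \<Rightarrow> nat \<Rightarrow> nat) \<times> ('a list \<Rightarrow> 'a list)) set" where
  "H_carrier n v0 = {(\<sigma>, g). (\<forall>v\<in>tree_vertices. \<sigma> v permutes {..<n})
      \<and> (\<forall>v. v \<notin> tree_vertices \<longrightarrow> \<sigma> v = id)
      \<and> finite {v \<in> tree_vertices. \<sigma> v 0 \<noteq> 0}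
      \<and> g \<in> tree_aut \<and> g v0 = v0}"

definition shift_act :: "('a list \<Rightarrow> 'a list) \<Rightarrow> ('a list \<Rightarrow> nat \<Rightarrow> nat) \<Rightarrow> ('a list \<Rightarrow> nat \<Rightarrow> nat)" where
  "shift_act g \<tau> = (\<lambda>v. if v \<in> tree_vertices then \<tau> (inv_into tree_vertices g v) else id)"

definition H_group :: "nat \<Rightarrow> 'a list
    \<Rightarrow> (('a list \<Rightarrow> nat \<Rightarrow> nat) \<times> ('a list \<Rightarrow> 'a list)) monoid" where
  "H_group n v0 = \<lparr>carrier = H_carrier n v0,
      Group.monoid.mult = (\<lambda>(\<sigma>, g) (\<tau>, h). ((\<lambda>v. \<sigma> v \<circ> shift_act g \<tau> v), g \<circ> h)),
      one = ((\<lambda>v. id), id)\<rparr>"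

text \<open>Topology of H_{n,d}: the product of the topology of the restricted product
  (in which the product group S_{n-1}^V, with its product topology, is compact open)
  and the permutation (pointwise convergence) topology of K_d. A basis of
  neighbourhoods of (sigma, g) is given, for finite sets S of vertices, by the elements
  (tau, k) with tau lying in the coset sigma.S_{n-1}^V (i.e. tau v 0 = sigma v 0 for all v)
  and agreeing with (sigma, g) on S.\<close>

definition H_basic_open :: "nat \<Rightarrow> 'a list \<Rightarrow> ('a list \<Rightarrow> nat \<Rightarrow> nat) \<Rightarrow> ('a list \<Rightarrow> 'a list)
    \<Rightarrow> 'a list set \<Rightarrow> (('a list \<Rightarrow> nat \<Rightarrow> nat) \<times> ('a list \<Rightarrow> 'a list)) set" where
  "H_basic_open n v0 \<sigma> g S = {(\<tau>, k) \<in> H_carrier n v0.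
      (\<forall>v\<in>tree_vertices. \<tau> v 0 = \<sigma> v 0) \<and> (\<forall>v\<in>S. \<tau> v = \<sigma> v \<and> k v = g v)}"

definition H_topology :: "nat \<Rightarrow> 'a list
    \<Rightarrow> (('a list \<Rightarrow> nat \<Rightarrow> nat) \<times> ('a list \<Rightarrow> 'a list)) topology" where
  "H_topology n v0 = topology_generated_by
     {H_basic_open n v0 \<sigma> g S | \<sigma> g S. (\<sigma>, g) \<in> H_carrier n v0 \<and> finite S \<and> S \<subseteq> tree_vertices}"

text \<open>A cocompact lattice in a locally compact group H: a discrete subgroup Gamma
  such that H / Gamma is compact, i.e. H = C Gamma for some compact set C.\<close>

definition cocompact_lattice :: "('g, 'b) monoid_scheme \<Rightarrow> 'g topology \<Rightarrow> 'g set \<Rightarrow> bool" where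
  "cocompact_lattice H T \<Gamma> \<longleftrightarrow> subgroup \<Gamma> H
     \<and> (\<forall>x\<in>\<Gamma>. \<exists>U. openin T U \<and> U \<inter> \<Gamma> = {x})
     \<and> (\<exists>C. compactin T C \<and> carrier H = {c \<otimes>\<^bsub>H\<^esub> \<gamma> | c \<gamma>. c \<in> C \<and> \<gamma> \<in> \<Gamma>})"

end

(*
  The local permutations of g in K(F, F') lie in F', and F' permutes the n right cosets of F.
  Recording at every vertex g w the permutation of F'/F induced by the local permutation of g at w
  turns g into an element of the restricted product; since almost all local permutations of g lie
  in F, almost all coordinates fix the coset F.  The image is discrete because an automorphism is
  determined by its local permutation at v0 and, at every other vertex, by its local permutation
  modulo the semiregular group F.  It is cocompact because for any (tau, k) one can build an element
  of K(F, F') whose local permutation at each vertex w lies in the coset that tau (k w) sends to F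
  -- possible because F' preserves the F-orbits -- and dividing by it lands in the compact subgroup
  S_{n-1}^V x K_d, a continuous image of a product of finite discrete spaces.
*)

theory Submission
  imports Defs
begin

abbreviation V :: "'a list set" where "V \<equiv> tree_vertices"

subsection \<open>Reduced words\<close>

lemma Nil_in_tree_vertices [simp]: "[] \<in> V"
  by (simp add: tree_vertices_def)

lemma Cons_in_tree_vertices: "a # w \<in> V \<longleftrightarrow> w \<in> V \<and> (w = [] \<or> hd w \<noteq> a)"
  by (cases w) (auto simp: tree_vertices_def nth_Cons' less_Suc_eq_0_disj)

lemma rev_in_tree_vertices: "w \<in> V \<Longrightarrow> rev w \<in> V"
  unfolding tree_vertices_def
proof clarsimp
  fix i assume reduced: "\<forall>i. Suc i < length w \<longrightarrow> w ! i \<noteq> w ! Suc i" and i: "Suc i < length w"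
    and eq: "rev w ! i = rev w ! Suc i"
  define j where "j = length w - Suc (Suc i)"
  have "Suc j < length w" using i by (simp add: j_def)
  moreover have "rev w ! i = w ! Suc j" "rev w ! Suc i = w ! j"
    using i by (auto simp: rev_nth j_def Suc_diff_Suc)
  ultimately show False using reduced eq by metis
qed

lemma nbr_in_tree_vertices [simp]: "w \<in> V \<Longrightarrow> nbr a w \<in> V"
  by (cases w) (auto simp: nbr_def Cons_in_tree_vertices)

lemma nbr_Cons_same [simp]: "nbr a (a # w) = w"
  by (simp add: nbr_def)

lemma nbr_nbr [simp]: "w \<in> V \<Longrightarrow> nbr a (nbr a w) = w"
  by (cases w) (auto simp: nbr_def Cons_in_tree_vertices)

lemma nbr_eq_nbr_iff [simp]: "nbr a w = nbr b w \<longleftrightarrow> a = b"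
  by (cases w) (auto simp: nbr_def split: if_splits)

lemma nbr_eq_Cons: "w = [] \<or> hd w \<noteq> a \<Longrightarrow> nbr a w = a # w"
  by (auto simp: nbr_def)

text \<open>\<open>walk u w\<close> is reached from \<open>u\<close> along the edges coloured by the letters of \<open>w\<close>, last
  letter first; \<open>walk u\<close> is the colour-preserving automorphism moving \<open>[]\<close> to \<open>u\<close>.\<close>

definition walk :: "'a list \<Rightarrow> 'a list \<Rightarrow> 'a list" where
  "walk u w = foldr nbr w u"

lemma walk_Nil [simp]: "walk u [] = u"
  by (simp add: walk_def)

lemma walk_Cons [simp]: "walk u (a # w) = nbr a (walk u w)"
  by (simp add: walk_def)

lemma walk_in_tree_vertices [simp]: "u \<in> V \<Longrightarrow> walk u w \<in> V"
  by (induction w) auto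

lemma walk_nbr:
  assumes "u \<in> V" shows "walk u (nbr a w) = nbr a (walk u w)"
proof (cases "w \<noteq> [] \<and> hd w = a")
  case True
  then obtain w' where "w = a # w'" by (cases w) auto
  with assms show ?thesis by simp
qed (simp add: nbr_eq_Cons)

lemma walk_rev_self: "walk (rev u) u = []"
proof -
  have "foldr nbr (rev xs) (xs @ ys) = ys" for xs ys :: "'a list"
    by (induction xs) auto
  from this[of "rev u" "[]"] show ?thesis by (simp add: walk_def)
qed

lemma colour_preserving_eq_id:
  assumes "f [] = []" and "\<And>w a. w \<in> V \<Longrightarrow> f (nbr a w) = nbr a (f w)" and "w \<in> V"
  shows "f w = w"
  using assms(3)
proof (induction w)
  case (Cons a w)
  then have "w \<in> V" and "nbr a w = a # w"
    by (simp_all add: Cons_in_tree_vertices nbr_eq_Cons)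
  then show ?case using assms(2)[of w a] Cons.IH by simp
qed (simp add: assms(1))

lemma walk_rev_walk: "u \<in> V \<Longrightarrow> w \<in> V \<Longrightarrow> walk (rev u) (walk u w) = w"
  by (rule colour_preserving_eq_id) (simp_all add: walk_rev_self walk_nbr rev_in_tree_vertices)

lemma walk_walk_rev: "u \<in> V \<Longrightarrow> w \<in> V \<Longrightarrow> walk u (walk (rev u) w) = w"
  using walk_rev_walk[of "rev u"] by (simp add: rev_in_tree_vertices)

lemma tree_vertices_induct [consumes 2, case_names base step]:
  assumes "w \<in> V" and "v0 \<in> V" and "P v0" and step: "\<And>v a. v \<in> V \<Longrightarrow> P v \<Longrightarrow> P (nbr a v)"
  shows "P w"
proof -
  have "P (walk v0 w)" if "w \<in> V" for w
    using that by (induction w) (auto simp: Cons_in_tree_vertices assms(2,3) intro: step)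
  from this[of "rev v0"] have "P []"
    using assms(2) walk_rev_self[of "rev v0"] by (simp add: rev_in_tree_vertices)
  show ?thesis
    using assms(1)
  proof (induction w)
    case (Cons a w)
    then have "w \<in> V" and "nbr a w = a # w"
      by (simp_all add: Cons_in_tree_vertices nbr_eq_Cons)
    then show ?case using step Cons.IH by metis
  qed (rule \<open>P []\<close>)
qed

subsection \<open>Automorphisms and local permutations\<close>

lemma tree_aut_bij: "g \<in> tree_aut \<Longrightarrow> bij_betw g V V"
  by (simp add: tree_aut_def)

lemma tree_aut_in_tree_vertices: "g \<in> tree_aut \<Longrightarrow> v \<in> V \<Longrightarrow> g v \<in> V"
  by (rule bij_betw_apply[OF tree_aut_bij])

lemma tree_aut_inj_on: "g \<in> tree_aut \<Longrightarrow> inj_on g V"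
  by (rule bij_betw_imp_inj_on[OF tree_aut_bij])

lemma tree_aut_outside: "g \<in> tree_aut \<Longrightarrow> v \<notin> V \<Longrightarrow> g v = v"
  by (simp add: tree_aut_def)

lemma tree_aut_adj_iff:
  "g \<in> tree_aut \<Longrightarrow> v \<in> V \<Longrightarrow> w \<in> V \<Longrightarrow> tree_adj (g v) (g w) \<longleftrightarrow> tree_adj v w"
  by (simp add: tree_aut_def)

lemma tree_aut_eqI:
  assumes "g \<in> tree_aut" and "h \<in> tree_aut" and "\<And>v. v \<in> V \<Longrightarrow> g v = h v"
  shows "g = h"
proof
  fix v show "g v = h v" by (cases "v \<in> V") (simp_all add: assms tree_aut_outside)
qed

lemma id_in_tree_aut: "id \<in> tree_aut"
  by (simp add: tree_aut_def)

lemma tree_aut_comp: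
  fixes g h :: "'a list \<Rightarrow> 'a list"
  assumes "g \<in> tree_aut" and "h \<in> tree_aut"
  shows "g \<circ> h \<in> tree_aut"
  unfolding tree_aut_def
proof (intro CollectI conjI ballI allI impI)
  show "bij_betw (g \<circ> h) V V"
    using bij_betw_trans[OF tree_aut_bij[OF assms(2)] tree_aut_bij[OF assms(1)]] .
  fix v w :: "'a list" assume "v \<in> V" "w \<in> V"
  then show "tree_adj v w \<longleftrightarrow> tree_adj ((g \<circ> h) v) ((g \<circ> h) w)"
    using assms by (simp add: tree_aut_adj_iff tree_aut_in_tree_vertices)
next
  fix v :: "'a list" assume "v \<notin> V"
  then show "(g \<circ> h) v = v" using assms by (simp add: tree_aut_outside)
qed

lemma local_perm_unique: "(\<And>a. g (nbr a v) = nbr (f a) (g v)) \<Longrightarrow> local_perm g v = f"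
  by (rule ext) (auto simp: local_perm_def)

lemma tree_aut_nbr:
  assumes "g \<in> tree_aut" and "v \<in> V"
  shows "g (nbr a v) = nbr (local_perm g v a) (g v)"
proof -
  have "\<exists>b. g (nbr a v) = nbr b (g v)" for a
    using tree_aut_adj_iff[OF assms nbr_in_tree_vertices[OF assms(2)], of a] by (auto simp: tree_adj_def)
  then obtain f where "\<And>a. g (nbr a v) = nbr (f a) (g v)" by metis
  moreover from this have "local_perm g v = f" by (rule local_perm_unique)
  ultimately show ?thesis by simp
qed

lemma inj_local_perm:
  assumes "g \<in> tree_aut" and "v \<in> V"
  shows "inj (local_perm g v)"
proof
  fix a b assume "local_perm g v a = local_perm g v b"
  then have "g (nbr a v) = g (nbr b v)" by (simp add: tree_aut_nbr[OF assms])
  then show "a = b" using inj_onD[OF tree_aut_inj_on[OF assms(1)]] assms(2) by fastforce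
qed

lemma bij_local_perm: "g \<in> tree_aut \<Longrightarrow> v \<in> V \<Longrightarrow> bij (local_perm (g :: 'a::finite list \<Rightarrow> _) v)"
  by (simp add: bij_def finite_UNIV_inj_surj inj_local_perm)

lemma local_perm_nbr_same:
  assumes "g \<in> tree_aut" and "v \<in> V"
  shows "local_perm g (nbr a v) a = local_perm g v a"
proof -
  have "g v = nbr (local_perm g (nbr a v) a) (nbr (local_perm g v a) (g v))"
    using tree_aut_nbr[OF assms(1), of "nbr a v" a] tree_aut_nbr[OF assms] assms(2) by simp
  then have "nbr (local_perm g (nbr a v) a) (g v)
      = nbr (local_perm g (nbr a v) a) (nbr (local_perm g (nbr a v) a) (nbr (local_perm g v a) (g v)))"
    by simp
  also have "\<dots> = nbr (local_perm g v a) (g v)"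
    using tree_aut_in_tree_vertices[OF assms] by simp
  finally show ?thesis by simp
qed

lemma local_perm_comp:
  "g \<in> tree_aut \<Longrightarrow> h \<in> tree_aut \<Longrightarrow> v \<in> V \<Longrightarrow> local_perm (g \<circ> h) v = local_perm g (h v) \<circ> local_perm h v"
  by (rule local_perm_unique) (simp add: tree_aut_nbr tree_aut_in_tree_vertices)

lemma local_perm_id [simp]: "local_perm id v = id"
  by (rule local_perm_unique) simp

lemma tree_autI:
  fixes g :: "'a list \<Rightarrow> 'a list"
  assumes bij: "bij_betw g V V" and outside: "\<And>v. v \<notin> V \<Longrightarrow> g v = v"
    and local: "\<And>v a. v \<in> V \<Longrightarrow> g (nbr a v) = nbr (s v a) (g v)"
    and bij_s: "\<And>v. v \<in> V \<Longrightarrow> bij (s v)"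
  shows "g \<in> tree_aut"
  unfolding tree_aut_def
proof (intro CollectI conjI ballI allI impI bij outside)
  fix v w :: "'a list" assume v: "v \<in> V" and w: "w \<in> V"
  have "tree_adj (g v) (g w) \<longleftrightarrow> (\<exists>a. g w = nbr (s v a) (g v))"
    using bij_s[OF v] unfolding tree_adj_def by (metis bij_pointE)
  also have "\<dots> \<longleftrightarrow> (\<exists>a. g w = g (nbr a v))"
    using local[OF v] by simp
  also have "\<dots> \<longleftrightarrow> tree_adj v w"
    using v w bij_betw_imp_inj_on[OF bij] by (auto simp: tree_adj_def inj_on_eq_iff)
  finally show "tree_adj v w \<longleftrightarrow> tree_adj (g v) (g w)" by simp
qed

text \<open>The name \<open>inv\<close> is taken by the group syntax of HOL-Algebra.\<close>

abbreviation perm_inv :: "('b \<Rightarrow> 'b) \<Rightarrow> 'b \<Rightarrow> 'b" where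
  "perm_inv f \<equiv> inv_into UNIV f"

definition aut_inv :: "('a list \<Rightarrow> 'a list) \<Rightarrow> 'a list \<Rightarrow> 'a list" where
  "aut_inv g = (\<lambda>v. if v \<in> V then inv_into V g v else v)"

lemma aut_inv_in_tree_vertices: "g \<in> tree_aut \<Longrightarrow> v \<in> V \<Longrightarrow> aut_inv g v \<in> V"
  using bij_betw_apply[OF bij_betw_inv_into[OF tree_aut_bij]] by (simp add: aut_inv_def)

lemma aut_inv_left [simp]: "g \<in> tree_aut \<Longrightarrow> v \<in> V \<Longrightarrow> aut_inv g (g v) = v"
  using bij_betw_inv_into_left[OF tree_aut_bij] by (simp add: aut_inv_def tree_aut_in_tree_vertices)

lemma aut_inv_right [simp]: "g \<in> tree_aut \<Longrightarrow> v \<in> V \<Longrightarrow> g (aut_inv g v) = v"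
  using bij_betw_inv_into_right[OF tree_aut_bij] by (simp add: aut_inv_def)

lemma aut_inv_in_tree_aut:
  fixes g :: "'a list \<Rightarrow> 'a list"
  assumes g: "g \<in> tree_aut"
  shows "aut_inv g \<in> tree_aut"
  unfolding tree_aut_def
proof (intro CollectI conjI ballI allI impI)
  have "bij_betw (inv_into V g) V V" using tree_aut_bij[OF g] by (rule bij_betw_inv_into)
  then show "bij_betw (aut_inv g) V V"
    by (rule bij_betw_cong[THEN iffD1, rotated]) (simp add: aut_inv_def)
  fix v w :: "'a list" assume v: "v \<in> V" and w: "w \<in> V"
  show "tree_adj v w \<longleftrightarrow> tree_adj (aut_inv g v) (aut_inv g w)"
    using tree_aut_adj_iff[OF g aut_inv_in_tree_vertices[OF g v] aut_inv_in_tree_vertices[OF g w]] g v w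
    by simp
qed (simp add: aut_inv_def)

lemma aut_inv_comp_self: "g \<in> tree_aut \<Longrightarrow> aut_inv g \<circ> g = id"
  by (rule tree_aut_eqI) (simp_all add: tree_aut_comp aut_inv_in_tree_aut id_in_tree_aut)

lemma comp_aut_inv_self: "g \<in> tree_aut \<Longrightarrow> g \<circ> aut_inv g = id"
  by (rule tree_aut_eqI) (simp_all add: tree_aut_comp aut_inv_in_tree_aut id_in_tree_aut)

lemma aut_inv_comp:
  assumes "g \<in> tree_aut" and "h \<in> tree_aut" and "v \<in> V"
  shows "aut_inv (g \<circ> h) v = aut_inv h (aut_inv g v)"
  using aut_inv_left[OF tree_aut_comp[OF assms(1,2)], of "aut_inv h (aut_inv g v)"] assms
  by (simp add: aut_inv_in_tree_vertices)

lemma aut_inv_aut_inv: "g \<in> tree_aut \<Longrightarrow> v \<in> V \<Longrightarrow> aut_inv (aut_inv g) v = g v"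
  using aut_inv_left[OF aut_inv_in_tree_aut, of g "g v"] by (simp add: tree_aut_in_tree_vertices)

lemma local_perm_aut_inv:
  assumes "g \<in> tree_aut" and "v \<in> V"
  shows "local_perm (aut_inv g) (g v) = perm_inv (local_perm g v)"
proof (rule inv_unique_comp[symmetric])
  show "local_perm (aut_inv g) (g v) \<circ> local_perm g v = id"
    using local_perm_comp[OF aut_inv_in_tree_aut[OF assms(1)] assms(1,2)] assms
    by (simp add: aut_inv_comp_self)
  show "local_perm g v \<circ> local_perm (aut_inv g) (g v) = id"
    using local_perm_comp[OF assms(1) aut_inv_in_tree_aut[OF assms(1)], of "g v"] assms
    by (simp add: comp_aut_inv_self tree_aut_in_tree_vertices)
qed

lemma local_perm_aut_inv_in_tree_vertices:
  "g \<in> tree_aut \<Longrightarrow> v \<in> V \<Longrightarrow> local_perm (aut_inv g) v = perm_inv (local_perm g (aut_inv g v))"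
  using local_perm_aut_inv[of g "aut_inv g v"] by (simp add: aut_inv_in_tree_vertices)

lemma shift_act_in_tree_vertices: "v \<in> V \<Longrightarrow> shift_act g \<tau> v = \<tau> (aut_inv g v)"
  by (simp add: shift_act_def aut_inv_def)

lemma shift_act_outside: "v \<notin> V \<Longrightarrow> shift_act g \<tau> v = id"
  by (simp add: shift_act_def)

lemma tree_aut_eq_by_local_perm:
  assumes x: "x \<in> tree_aut" and y: "y \<in> tree_aut" and "v0 \<in> V" and "x v0 = y v0"
    and local: "\<And>w. w \<in> V \<Longrightarrow> local_perm x w = local_perm y w"
  shows "x = y"
proof (rule tree_aut_eqI[OF x y])
  fix w :: "'a list" assume "w \<in> V"
  then show "x w = y w"
    using assms(3,4) by (induction rule: tree_vertices_induct) (simp_all add: tree_aut_nbr x y local)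
qed

text \<open>Along an edge coloured \<open>a\<close>, the two local permutations at the far end agree at \<open>a\<close>,
  so they differ by an element of \<open>F\<close> with a fixed point.\<close>

lemma tree_aut_eq_by_semiregular:
  assumes "semiregular F" and x: "x \<in> tree_aut" and y: "y \<in> tree_aut" and v0: "v0 \<in> V"
    and "x v0 = y v0" and "local_perm x v0 = local_perm y v0"
    and coset: "\<And>w. w \<in> V \<Longrightarrow> x w = y w \<Longrightarrow> \<exists>f\<in>F. local_perm y w = local_perm x w \<circ> f"
  shows "x = y"
proof (rule tree_aut_eqI[OF x y])
  fix w :: "'a list" assume "w \<in> V"
  then have "x w = y w \<and> local_perm x w = local_perm y w"
    using v0
  proof (induction rule: tree_vertices_induct)
    case base
    show ?case using assms(5,6) by simp
  next
    case (step v a)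
    then have v: "v \<in> V" and w: "nbr a v \<in> V" by simp_all
    have eq: "x (nbr a v) = y (nbr a v)"
      using step.IH by (simp add: tree_aut_nbr[OF x v] tree_aut_nbr[OF y v])
    obtain f where f: "f \<in> F" "local_perm y (nbr a v) = local_perm x (nbr a v) \<circ> f"
      using coset[OF w eq] by blast
    have "local_perm x (nbr a v) (f a) = local_perm x (nbr a v) a"
      using f(2) local_perm_nbr_same[OF x v] local_perm_nbr_same[OF y v] step.IH
      by (metis comp_apply)
    then have "f a = a" using inj_local_perm[OF x w] by (simp add: inj_eq)
    then have "f = id" using \<open>semiregular F\<close> f(1) unfolding semiregular_def by blast
    then show ?case using eq f(2) by simp
  qed
  then show "x w = y w" ..
qed

subsection \<open>Automorphisms with prescribed local permutations\<close>

text \<open>Local data are propagated along reduced words \<open>w\<close>, read as the vertices \<open>walk u w\<close>: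
  the local permutation at \<open>u\<close> is \<open>r\<close>, and at \<open>walk u (a # w)\<close> it is \<open>ch (walk u (a # w)) a b\<close>,
  where \<open>b\<close> is the colour that the edge back to \<open>walk u w\<close> is forced to receive.\<close>

fun extension_perm ::
  "('a \<Rightarrow> 'a) \<Rightarrow> ('a list \<Rightarrow> 'a \<Rightarrow> 'a \<Rightarrow> 'a \<Rightarrow> 'a) \<Rightarrow> 'a list \<Rightarrow> 'a list \<Rightarrow> 'a \<Rightarrow> 'a"
where
  "extension_perm r ch u [] = r"
| "extension_perm r ch u (a # w) = ch (walk u (a # w)) a (extension_perm r ch u w a)"

fun extension_word ::
  "('a \<Rightarrow> 'a) \<Rightarrow> ('a list \<Rightarrow> 'a \<Rightarrow> 'a \<Rightarrow> 'a \<Rightarrow> 'a) \<Rightarrow> 'a list \<Rightarrow> 'a list \<Rightarrow> 'a list"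
where
  "extension_word r ch u [] = []"
| "extension_word r ch u (a # w) = nbr (extension_perm r ch u w a) (extension_word r ch u w)"

definition extension ::
  "('a \<Rightarrow> 'a) \<Rightarrow> ('a list \<Rightarrow> 'a \<Rightarrow> 'a \<Rightarrow> 'a \<Rightarrow> 'a) \<Rightarrow> 'a list \<Rightarrow> 'a list \<Rightarrow> 'a list"
where
  "extension r ch u = (\<lambda>v. if v \<in> V then walk u (extension_word r ch u (walk (rev u) v)) else v)"

locale extension_data =
  fixes r :: "'a \<Rightarrow> 'a" and ch :: "'a list \<Rightarrow> 'a \<Rightarrow> 'a \<Rightarrow> 'a \<Rightarrow> 'a" and u :: "'a list"
  assumes bij_r: "bij r" and bij_ch: "\<And>w a b. bij (ch w a b)" and ch_apply: "\<And>w a b. ch w a b a = b"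
    and u: "u \<in> V"
begin

abbreviation "L \<equiv> extension_perm r ch u"
abbreviation "W \<equiv> extension_word r ch u"
abbreviation "Ext \<equiv> extension r ch u"

declare ch_apply [simp]

lemma bij_extension_perm: "bij (L w)"
  by (induction w) (simp_all add: bij_r bij_ch)

lemma extension_word_reduced:
  "w \<in> V \<Longrightarrow> W w \<in> V \<and> (\<forall>b w'. w = b # w' \<longrightarrow> W w = L w' b # W w')"
proof (induction w)
  case (Cons a w)
  then have w: "w \<in> V" "w = [] \<or> hd w \<noteq> a" by (simp_all add: Cons_in_tree_vertices)
  with Cons.IH have IH: "W w \<in> V" "\<forall>b w'. w = b # w' \<longrightarrow> W w = L w' b # W w'" by auto
  have "W w = [] \<or> hd (W w) \<noteq> L w a"
  proof (cases w)
    case (Cons b w')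
    then have "hd (W w) = L w b" using IH(2) by simp
    moreover have "a \<noteq> b" using w Cons by simp
    ultimately show ?thesis using bij_extension_perm[of w] by (simp add: bij_is_inj inj_eq)
  qed simp
  then have "W (a # w) = L w a # W w" by (simp add: nbr_eq_Cons)
  moreover have "W (a # w) \<in> V" using IH(1) by simp
  ultimately show ?case by (simp del: extension_word.simps)
qed simp

lemma extension_word_in_tree_vertices: "w \<in> V \<Longrightarrow> W w \<in> V"
  using extension_word_reduced by blast

lemma extension_word_Cons: "a # w \<in> V \<Longrightarrow> W (a # w) = L w a # W w"
  using extension_word_reduced by blast

lemma extension_word_nbr:
  assumes "w \<in> V" shows "W (nbr a w) = nbr (L w a) (W w)"
proof (cases "w \<noteq> [] \<and> hd w = a")
  case True
  then obtain w' where w: "w = a # w'" by (cases w) auto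
  with assms have "W w = L w' a # W w'" by (simp add: extension_word_Cons del: extension_word.simps)
  then show ?thesis using w by simp
qed (simp add: nbr_eq_Cons)

lemma extension_word_inj: "w \<in> V \<Longrightarrow> w' \<in> V \<Longrightarrow> W w = W w' \<Longrightarrow> w = w'"
proof (induction w arbitrary: w')
  case Nil
  then show ?case
    by (cases w') (simp_all add: extension_word_Cons del: extension_word.simps(2))
next
  case (Cons a w)
  then obtain b w2 where w': "w' = b # w2"
    by (cases w') (simp_all add: extension_word_Cons del: extension_word.simps(2))
  have "w \<in> V" and "w2 \<in> V" using Cons.prems w' by (simp_all add: Cons_in_tree_vertices)
  from Cons.prems w' have "L w a # W w = L w2 b # W w2"
    by (simp add: extension_word_Cons del: extension_word.simps)
  then have "L w a = L w2 b" and "W w = W w2" by simp_all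
  from Cons.IH[OF \<open>w \<in> V\<close> \<open>w2 \<in> V\<close> \<open>W w = W w2\<close>] have "w = w2" .
  with \<open>L w a = L w2 b\<close> have "a = b" using bij_extension_perm[of w] by (simp add: bij_is_inj inj_eq)
  with w' \<open>w = w2\<close> show ?case by simp
qed

lemma extension_word_surj: "y \<in> V \<Longrightarrow> \<exists>w\<in>V. W w = y"
proof (induction y)
  case Nil
  show ?case by (intro bexI[of _ "[]"]) simp_all
next
  case (Cons b y)
  then have y: "y \<in> V" "y = [] \<or> hd y \<noteq> b" by (simp_all add: Cons_in_tree_vertices)
  then obtain w where w: "w \<in> V" "W w = y" using Cons.IH by blast
  define a where "a = perm_inv (L w) b"
  have La: "L w a = b"
    using bij_extension_perm[of w] by (simp add: a_def bij_is_surj surj_f_inv_f)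
  have "a # w \<in> V"
  proof (cases w)
    case (Cons c w')
    then have "y = L w c # W w'" using w by (simp add: extension_word_Cons del: extension_word.simps)
    then have "c \<noteq> a" using y La by auto
    then show ?thesis using w Cons by (simp add: Cons_in_tree_vertices)
  qed (simp add: Cons_in_tree_vertices)
  moreover have "W (a # w) = b # y"
    using extension_word_Cons[OF calculation] w La by (simp del: extension_word.simps)
  ultimately show ?case by blast
qed

lemma extension_in_tree_vertices: "v \<in> V \<Longrightarrow> Ext v \<in> V"
  by (simp add: extension_def u rev_in_tree_vertices extension_word_in_tree_vertices)

lemma extension_nbr:
  assumes "v \<in> V" shows "Ext (nbr a v) = nbr (L (walk (rev u) v) a) (Ext v)"
  using assms u
  by (simp add: extension_def walk_nbr rev_in_tree_vertices extension_word_nbr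
      extension_word_in_tree_vertices)

lemma extension_base [simp]: "Ext u = u"
  using u by (simp add: extension_def walk_rev_self)

lemma inj_on_extension: "inj_on Ext V"
proof
  have ru: "rev u \<in> V" using u by (rule rev_in_tree_vertices)
  fix v w :: "'a list" assume v: "v \<in> V" and w: "w \<in> V" and eq: "Ext v = Ext w"
  have "walk u (W (walk (rev u) v)) = Ext v" using v by (simp add: extension_def)
  also have "\<dots> = Ext w" by (rule eq)
  also have "\<dots> = walk u (W (walk (rev u) w))" using w by (simp add: extension_def)
  finally have "walk (rev u) (walk u (W (walk (rev u) v))) = walk (rev u) (walk u (W (walk (rev u) w)))"
    by (rule arg_cong)
  then have "W (walk (rev u) v) = W (walk (rev u) w)"
    by (simp only: walk_rev_walk[OF u extension_word_in_tree_vertices[OF walk_in_tree_vertices[OF ru]]])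
  then have "walk (rev u) v = walk (rev u) w"
    by (rule extension_word_inj[OF walk_in_tree_vertices[OF ru] walk_in_tree_vertices[OF ru]])
  have "v = walk u (walk (rev u) v)" by (rule walk_walk_rev[OF u v, symmetric])
  also have "\<dots> = walk u (walk (rev u) w)" by (simp only: \<open>walk (rev u) v = walk (rev u) w\<close>)
  also have "\<dots> = w" by (rule walk_walk_rev[OF u w])
  finally show "v = w" .
qed

lemma extension_image: "Ext ` V = V"
proof
  show "Ext ` V \<subseteq> V" using extension_in_tree_vertices by blast
  show "V \<subseteq> Ext ` V"
  proof
    fix y :: "'a list" assume y: "y \<in> V"
    obtain w where w: "w \<in> V" "W w = walk (rev u) y"
      using extension_word_surj[OF walk_in_tree_vertices[OF rev_in_tree_vertices[OF u]]] by blast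
    have "walk u w \<in> V" using u by simp
    moreover have "Ext (walk u w) = walk u (W w)"
      using walk_rev_walk[OF u w(1)] \<open>walk u w \<in> V\<close> by (simp add: extension_def)
    then have "y = Ext (walk u w)" using w(2) walk_walk_rev[OF u y] by simp
    ultimately show "y \<in> Ext ` V" by (rule rev_image_eqI)
  qed
qed

lemma extension_in_tree_aut: "Ext \<in> tree_aut"
proof (rule tree_autI[where s="\<lambda>v. L (walk (rev u) v)"])
  show "bij_betw Ext V V" by (simp add: bij_betw_def inj_on_extension extension_image)
  show "\<And>v. v \<notin> V \<Longrightarrow> Ext v = v" by (simp add: extension_def)
  show "\<And>v a. v \<in> V \<Longrightarrow> Ext (nbr a v) = nbr (L (walk (rev u) v) a) (Ext v)"
    by (rule extension_nbr)
  show "\<And>v. v \<in> V \<Longrightarrow> bij (L (walk (rev u) v))" by (rule bij_extension_perm)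
qed

lemma local_perm_extension: "v \<in> V \<Longrightarrow> local_perm Ext v = L (walk (rev u) v)"
  by (rule local_perm_unique) (rule extension_nbr)

end

definition redirect :: "('a \<Rightarrow> 'a) \<Rightarrow> 'a \<Rightarrow> 'a \<Rightarrow> 'a \<Rightarrow> 'a" where
  "redirect p a b = Transposition.transpose (p a) b \<circ> p"

lemma bij_redirect: "bij p \<Longrightarrow> bij (redirect p a b)"
  by (simp add: redirect_def bij_comp)

lemma redirect_apply: "redirect p a b a = b"
  by (simp add: redirect_def)

lemma redirect_eq_self: "p a = b \<Longrightarrow> redirect p a b = p"
  by (simp add: redirect_def)

subsection \<open>Cosets of \<open>F\<close> in \<open>F'\<close>\<close>

lemma carrier_BijGroup_UNIV: "carrier (BijGroup UNIV) = {f. bij f}"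
  by (auto simp: BijGroup_def Bij_def)

lemma mult_BijGroup_UNIV: "bij f \<Longrightarrow> bij g \<Longrightarrow> f \<otimes>\<^bsub>BijGroup UNIV\<^esub> g = f \<circ> g"
  by (auto simp: BijGroup_def Bij_def compose_def)

lemma subgroup_BijGroup_bij: "subgroup S (BijGroup UNIV) \<Longrightarrow> f \<in> S \<Longrightarrow> bij f"
  using subgroup.subset carrier_BijGroup_UNIV by blast

lemma subgroup_BijGroup_id: "subgroup S (BijGroup UNIV) \<Longrightarrow> id \<in> S"
  using subgroup.one_closed[of S "BijGroup UNIV"] by (simp add: BijGroup_def id_def restrict_UNIV)

lemma subgroup_BijGroup_comp: "subgroup S (BijGroup UNIV) \<Longrightarrow> f \<in> S \<Longrightarrow> g \<in> S \<Longrightarrow> f \<circ> g \<in> S"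
  using subgroup.m_closed mult_BijGroup_UNIV subgroup_BijGroup_bij by metis

lemma subgroup_BijGroup_perm_inv:
  assumes "subgroup S (BijGroup UNIV)" and "f \<in> S"
  shows "perm_inv f \<in> S"
proof -
  have "m_inv (BijGroup UNIV) f = perm_inv f"
    using subgroup_BijGroup_bij[OF assms] by (subst inv_BijGroup) (auto simp: Bij_def)
  with subgroup.m_inv_closed[OF assms] show ?thesis by simp
qed

locale subgroup_pair =
  fixes F F' :: "('a::finite \<Rightarrow> 'a) set" and n :: nat
  assumes subgroup_F: "subgroup F (BijGroup UNIV)" and subgroup_F': "subgroup F' (BijGroup UNIV)"
    and F_subset: "F \<subseteq> F'"
    and n_eq: "n = card (rcosets\<^bsub>(BijGroup (UNIV :: 'a set))\<lparr>carrier := F'\<rparr>\<^esub> F)"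
begin

lemmas F_bij = subgroup_BijGroup_bij[OF subgroup_F]
lemmas F'_bij = subgroup_BijGroup_bij[OF subgroup_F']
lemmas F_id = subgroup_BijGroup_id[OF subgroup_F]
lemmas F'_id = subgroup_BijGroup_id[OF subgroup_F']
lemmas F_comp = subgroup_BijGroup_comp[OF subgroup_F]
lemmas F'_comp = subgroup_BijGroup_comp[OF subgroup_F']
lemmas F_perm_inv = subgroup_BijGroup_perm_inv[OF subgroup_F]
lemmas F'_perm_inv = subgroup_BijGroup_perm_inv[OF subgroup_F']

definition right_coset :: "('a \<Rightarrow> 'a) \<Rightarrow> ('a \<Rightarrow> 'a) set" where
  "right_coset a = (\<lambda>h. h \<circ> a) ` F"

definition cosets :: "('a \<Rightarrow> 'a) set set" where
  "cosets = right_coset ` F'"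

lemma card_cosets: "card cosets = n"
proof -
  have "F #>\<^bsub>(BijGroup UNIV)\<lparr>carrier := F'\<rparr>\<^esub> a = right_coset a" if "a \<in> F'" for a
    using F_bij F'_bij[OF that] by (auto simp: r_coset_def right_coset_def mult_BijGroup_UNIV)
  then have "rcosets\<^bsub>(BijGroup UNIV)\<lparr>carrier := F'\<rparr>\<^esub> F = cosets"
    by (auto simp: RCOSETS_def cosets_def)
  then show ?thesis by (simp add: n_eq)
qed

lemma mem_right_coset_iff: "a \<in> F' \<Longrightarrow> f \<in> right_coset a \<longleftrightarrow> f \<circ> perm_inv a \<in> F"
  using bij_is_inj[OF F'_bij] bij_is_surj[OF F'_bij]
  by (auto simp: right_coset_def o_assoc surj_iff comp_assoc intro!: image_eqI[of f _ "f \<circ> perm_inv a"])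

lemma right_coset_subset: "a \<in> F' \<Longrightarrow> right_coset a \<subseteq> F'"
  using F_subset F'_comp by (auto simp: right_coset_def)

lemma right_coset_eq_F_iff:
  assumes "b \<in> F'" shows "right_coset b = F \<longleftrightarrow> b \<in> F"
proof
  assume "right_coset b = F"
  then show "b \<in> F" using F_id unfolding right_coset_def by (metis id_comp image_eqI)
next
  assume "b \<in> F"
  then show "right_coset b = F"
    using mem_right_coset_iff[OF assms] F_comp F_perm_inv by (auto simp: right_coset_def)
qed

definition coset_act :: "('a \<Rightarrow> 'a) \<Rightarrow> ('a \<Rightarrow> 'a) set \<Rightarrow> ('a \<Rightarrow> 'a) set" where
  "coset_act f C = (\<lambda>h. h \<circ> perm_inv f) ` C"

lemma coset_act_right_coset: "coset_act f (right_coset a) = right_coset (a \<circ> perm_inv f)"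
  by (simp add: coset_act_def right_coset_def image_image o_assoc)

lemma coset_act_in_cosets: "f \<in> F' \<Longrightarrow> C \<in> cosets \<Longrightarrow> coset_act f C \<in> cosets"
  using coset_act_right_coset F'_comp F'_perm_inv by (auto simp: cosets_def)

lemma coset_act_comp: "f \<in> F' \<Longrightarrow> g \<in> F' \<Longrightarrow> coset_act (f \<circ> g) C = coset_act f (coset_act g C)"
  by (simp add: coset_act_def image_image o_inv_distrib F'_bij o_assoc)

lemma coset_act_id [simp]: "coset_act id C = C"
  by (simp add: coset_act_def)

lemma coset_act_eq_F_iff:
  assumes "f \<in> F'" and "C \<in> cosets"
  shows "coset_act f C = F \<longleftrightarrow> f \<in> C"
proof -
  obtain a where a: "a \<in> F'" "C = right_coset a" using assms(2) by (auto simp: cosets_def)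
  have inv: "perm_inv (a \<circ> perm_inv f) = f \<circ> perm_inv a" "perm_inv (f \<circ> perm_inv a) = a \<circ> perm_inv f"
    using F'_bij a(1) assms(1) by (simp_all add: o_inv_distrib bij_imp_bij_inv inv_inv_eq)
  have "coset_act f C = F \<longleftrightarrow> a \<circ> perm_inv f \<in> F"
    using a assms(1) F'_comp F'_perm_inv by (simp add: coset_act_right_coset right_coset_eq_F_iff)
  also have "\<dots> \<longleftrightarrow> f \<circ> perm_inv a \<in> F"
    using F_perm_inv inv by metis
  also have "\<dots> \<longleftrightarrow> f \<in> C" using mem_right_coset_iff a by simp
  finally show ?thesis .
qed

text \<open>This identifies \<open>\<Sigma>\<^sub>n\<close> with \<open>F' / F\<close> and \<open>\<frak>S\<^sub>n\<^sub>-\<^sub>1\<close> with the stabiliser of the coset \<open>F\<close>.\<close>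

definition coset_enum :: "nat \<Rightarrow> ('a \<Rightarrow> 'a) set" where
  "coset_enum = (SOME e. bij_betw e {..<n} cosets \<and> e 0 = F)"

lemma F_in_cosets: "F \<in> cosets"
  using right_coset_eq_F_iff[OF F'_id] F_id F'_id by (auto simp: cosets_def)

lemma n_pos: "0 < n"
  using F_in_cosets card_cosets card_gt_0_iff by fastforce

lemma coset_enum: "bij_betw coset_enum {..<n} cosets" "coset_enum 0 = F"
proof -
  obtain e where e: "bij_betw e {..<n} cosets"
    using ex_bij_betw_nat_finite[of cosets] card_cosets by (auto simp: atLeast0LessThan)
  define j where "j = inv_into {..<n} e F"
  have "F \<in> e ` {..<n}" using e F_in_cosets by (simp add: bij_betw_def)
  then have j: "j < n" "e j = F" using inv_into_into[of F e "{..<n}"] by (simp_all add: j_def f_inv_into_f)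
  have "bij_betw (Transposition.transpose 0 j) {..<n} {..<n}" using j n_pos by simp
  from bij_betw_trans[OF this e] j
  have "bij_betw (e \<circ> Transposition.transpose 0 j) {..<n} cosets \<and> (e \<circ> Transposition.transpose 0 j) 0 = F"
    by simp
  then have "\<exists>e. bij_betw e {..<n} cosets \<and> e 0 = F" by blast
  from someI_ex[OF this] show "bij_betw coset_enum {..<n} cosets" "coset_enum 0 = F"
    by (simp_all add: coset_enum_def)
qed

definition coset_index :: "('a \<Rightarrow> 'a) set \<Rightarrow> nat" where
  "coset_index C = the_inv_into {..<n} coset_enum C"

lemma coset_enum_in_cosets: "i < n \<Longrightarrow> coset_enum i \<in> cosets"
  using bij_betw_apply[OF coset_enum(1)] by simp

lemma coset_enum_subset: "i < n \<Longrightarrow> coset_enum i \<subseteq> F'"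
  using coset_enum_in_cosets right_coset_subset by (auto simp: cosets_def)

lemma coset_index_enum [simp]: "i < n \<Longrightarrow> coset_index (coset_enum i) = i"
  unfolding coset_index_def by (rule the_inv_into_f_f[OF bij_betw_imp_inj_on[OF coset_enum(1)]]) simp

lemma coset_enum_index [simp]: "C \<in> cosets \<Longrightarrow> coset_enum (coset_index C) = C"
  using coset_enum(1) by (simp add: coset_index_def bij_betw_def f_the_inv_into_f)

lemma coset_index_less: "C \<in> cosets \<Longrightarrow> coset_index C < n"
  using coset_enum(1) the_inv_into_into[of coset_enum "{..<n}" C "{..<n}"]
  by (auto simp: coset_index_def bij_betw_def)

lemma coset_index_eq_0_iff: "C \<in> cosets \<Longrightarrow> coset_index C = 0 \<longleftrightarrow> C = F"
  by (metis coset_enum(2) coset_enum_index coset_index_enum n_pos)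

definition coset_perm :: "('a \<Rightarrow> 'a) \<Rightarrow> nat \<Rightarrow> nat" where
  "coset_perm f = (\<lambda>i. if i < n then coset_index (coset_act f (coset_enum i)) else i)"

lemma coset_perm_less: "f \<in> F' \<Longrightarrow> i < n \<Longrightarrow> coset_perm f i < n"
  by (simp add: coset_perm_def coset_index_less coset_act_in_cosets coset_enum_in_cosets)

lemma coset_perm_comp:
  assumes "f \<in> F'" and "g \<in> F'"
  shows "coset_perm (f \<circ> g) = coset_perm f \<circ> coset_perm g"
proof
  fix i show "coset_perm (f \<circ> g) i = (coset_perm f \<circ> coset_perm g) i"
    using assms coset_perm_less[OF assms(2)] coset_act_in_cosets coset_enum_in_cosets
    by (simp add: coset_perm_def coset_act_comp)
qed

lemma coset_perm_id [simp]: "coset_perm id = id"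
  by (auto simp: coset_perm_def)

lemma coset_perm_perm_inv_left: "f \<in> F' \<Longrightarrow> coset_perm (perm_inv f) (coset_perm f i) = i"
  using coset_perm_comp[OF F'_perm_inv] F'_bij
  by (metis bij_is_inj comp_apply coset_perm_id id_apply inv_o_cancel)

lemma coset_perm_perm_inv_right: "f \<in> F' \<Longrightarrow> coset_perm f (coset_perm (perm_inv f) i) = i"
  using coset_perm_comp[OF _ F'_perm_inv] F'_bij
  by (metis bij_is_surj comp_apply coset_perm_id id_apply surj_iff)

lemma coset_perm_permutes: "f \<in> F' \<Longrightarrow> coset_perm f permutes {..<n}"
proof (rule bij_imp_permutes)
  assume f: "f \<in> F'"
  show "bij_betw (coset_perm f) {..<n} {..<n}"
    by (rule bij_betw_byWitness[where f' = "coset_perm (perm_inv f)"])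
      (use f coset_perm_perm_inv_left coset_perm_perm_inv_right coset_perm_less F'_perm_inv in auto)
qed (simp add: coset_perm_def)

lemma coset_perm_eq_0_iff: "f \<in> F' \<Longrightarrow> i < n \<Longrightarrow> coset_perm f i = 0 \<longleftrightarrow> f \<in> coset_enum i"
  by (simp add: coset_perm_def coset_index_eq_0_iff coset_act_in_cosets coset_enum_in_cosets
      coset_act_eq_F_iff)

lemma coset_perm_0_eq_0_iff: "f \<in> F' \<Longrightarrow> coset_perm f 0 = 0 \<longleftrightarrow> f \<in> F"
  using coset_perm_eq_0_iff[of f 0] n_pos coset_enum(2) by simp

lemma coset_perm_perm_inv_0:
  assumes "i < n" and "f \<in> coset_enum i"
  shows "coset_perm (perm_inv f) 0 = i"
proof -
  have "f \<in> F'" using assms coset_enum_subset by blast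
  with assms have "coset_perm f i = 0" by (simp add: coset_perm_eq_0_iff)
  with coset_perm_perm_inv_left[OF \<open>f \<in> F'\<close>, of i] show ?thesis by simp
qed

lemma coset_perm_0_eqD:
  assumes "a \<in> F'" and "b \<in> F'" and "coset_perm a 0 = coset_perm b 0"
  shows "\<exists>h\<in>F. b = a \<circ> h"
proof -
  have "coset_perm (perm_inv a \<circ> b) 0 = 0"
    using assms(3)[symmetric] coset_perm_comp[OF F'_perm_inv[OF assms(1)] assms(2)]
      coset_perm_perm_inv_left[OF assms(1)] by simp
  then have "perm_inv a \<circ> b \<in> F" using assms F'_comp F'_perm_inv coset_perm_0_eq_0_iff by blast
  moreover have "a \<circ> perm_inv a = id" using bij_is_surj[OF F'_bij[OF assms(1)]] surj_iff by blast
  then have "b = a \<circ> (perm_inv a \<circ> b)" by (simp add: o_assoc)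
  ultimately show ?thesis by blast
qed

end


subsection \<open>The group \<open>H\<^sub>n\<^sub>,\<^sub>d\<close>\<close>

lemma H_group_mult:
  "(\<sigma>, g) \<otimes>\<^bsub>H_group n v0\<^esub> (\<tau>, h) = ((\<lambda>v. \<sigma> v \<circ> shift_act g \<tau> v), g \<circ> h)"
  by (simp add: H_group_def)

lemma H_group_one: "\<one>\<^bsub>H_group n v0\<^esub> = ((\<lambda>v. id), id)"
  by (simp add: H_group_def)

lemma carrier_H_group: "carrier (H_group n v0) = H_carrier n v0"
  by (simp add: H_group_def)

lemma mem_H_carrier:
  "(\<sigma>, g) \<in> H_carrier n v0 \<longleftrightarrow> (\<forall>v\<in>V. \<sigma> v permutes {..<n}) \<and> (\<forall>v. v \<notin> V \<longrightarrow> \<sigma> v = id)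
      \<and> finite {v \<in> V. \<sigma> v 0 \<noteq> 0} \<and> g \<in> tree_aut \<and> g v0 = v0"
  by (simp add: H_carrier_def)

lemma H_mult_closed:
  assumes x: "(\<sigma>, g) \<in> H_carrier n v0" and y: "(\<tau>, h) \<in> H_carrier n v0"
  shows "((\<lambda>v. \<sigma> v \<circ> shift_act g \<tau> v), g \<circ> h) \<in> H_carrier n v0"
proof -
  have g: "g \<in> tree_aut" and h: "h \<in> tree_aut" using x y by (simp_all add: mem_H_carrier)
  have "\<sigma> v \<circ> shift_act g \<tau> v permutes {..<n}" if "v \<in> V" for v
    using x y that aut_inv_in_tree_vertices[OF g that]
    by (simp add: mem_H_carrier shift_act_in_tree_vertices permutes_compose)
  moreover have "{v \<in> V. (\<sigma> v \<circ> shift_act g \<tau> v) 0 \<noteq> 0}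
      \<subseteq> {v \<in> V. \<sigma> v 0 \<noteq> 0} \<union> g ` {w \<in> V. \<tau> w 0 \<noteq> 0}"
  proof
    fix v assume v: "v \<in> {v \<in> V. (\<sigma> v \<circ> shift_act g \<tau> v) 0 \<noteq> 0}"
    then have "\<sigma> v 0 \<noteq> 0 \<or> \<tau> (aut_inv g v) 0 \<noteq> 0" by (auto simp: shift_act_in_tree_vertices)
    moreover have "v = g (aut_inv g v)" and "aut_inv g v \<in> V"
      using v g by (simp_all add: aut_inv_in_tree_vertices)
    ultimately show "v \<in> {v \<in> V. \<sigma> v 0 \<noteq> 0} \<union> g ` {w \<in> V. \<tau> w 0 \<noteq> 0}" using v by blast
  qed
  then have "finite {v \<in> V. (\<sigma> v \<circ> shift_act g \<tau> v) 0 \<noteq> 0}"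
    by (rule finite_subset) (use x y in \<open>simp add: mem_H_carrier\<close>)
  ultimately show ?thesis
    using x y tree_aut_comp[OF g h] by (simp add: mem_H_carrier shift_act_outside)
qed

lemma monoid_H_group: "monoid (H_group n v0)"
proof (rule monoidI)
  fix x y assume "x \<in> carrier (H_group n v0)" "y \<in> carrier (H_group n v0)"
  then show "x \<otimes>\<^bsub>H_group n v0\<^esub> y \<in> carrier (H_group n v0)"
    using H_mult_closed by (cases x, cases y) (simp add: carrier_H_group H_group_mult)
next
  show "\<one>\<^bsub>H_group n v0\<^esub> \<in> carrier (H_group n v0)"
    by (simp add: H_group_one carrier_H_group mem_H_carrier id_in_tree_aut)
next
  fix x y z
  assume "x \<in> carrier (H_group n v0)" "y \<in> carrier (H_group n v0)" "z \<in> carrier (H_group n v0)"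
  then obtain \<sigma> g \<tau> h where x: "x = (\<sigma>, g)" and y: "y = (\<tau>, h)"
    and g: "g \<in> tree_aut" and h: "h \<in> tree_aut"
    by (cases x, cases y) (auto simp: carrier_H_group mem_H_carrier)
  obtain \<mu> k where z: "z = (\<mu>, k)" by (cases z)
  have "(\<sigma> v \<circ> shift_act g \<tau> v) \<circ> shift_act (g \<circ> h) \<mu> v
      = \<sigma> v \<circ> shift_act g (\<lambda>v. \<tau> v \<circ> shift_act h \<mu> v) v" for v
    by (cases "v \<in> V")
      (simp_all add: shift_act_in_tree_vertices shift_act_outside aut_inv_comp[OF g h]
        aut_inv_in_tree_vertices[OF g] fun_eq_iff)
  then show "x \<otimes>\<^bsub>H_group n v0\<^esub> y \<otimes>\<^bsub>H_group n v0\<^esub> z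
      = x \<otimes>\<^bsub>H_group n v0\<^esub> (y \<otimes>\<^bsub>H_group n v0\<^esub> z)"
    by (simp add: x y z H_group_mult o_assoc)
next
  fix x assume "x \<in> carrier (H_group n v0)"
  then obtain \<sigma> g where x: "x = (\<sigma>, g)" and out: "\<forall>v. v \<notin> V \<longrightarrow> \<sigma> v = id"
    by (cases x) (simp add: carrier_H_group mem_H_carrier)
  have "shift_act id \<sigma> v = \<sigma> v" for v
    using aut_inv_left[OF id_in_tree_aut, of v] out
    by (cases "v \<in> V") (simp_all add: shift_act_in_tree_vertices shift_act_outside)
  then show "\<one>\<^bsub>H_group n v0\<^esub> \<otimes>\<^bsub>H_group n v0\<^esub> x = x"
    by (simp add: x H_group_one H_group_mult fun_eq_iff)
  have "shift_act g (\<lambda>v. id) v = id" for v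
    by (cases "v \<in> V") (simp_all add: shift_act_in_tree_vertices shift_act_outside id_def)
  then show "x \<otimes>\<^bsub>H_group n v0\<^esub> \<one>\<^bsub>H_group n v0\<^esub> = x"
    by (simp add: x H_group_one H_group_mult)
qed

subsection \<open>The embedding of \<open>K(F, F')\<close>\<close>

locale lattice_setting = subgroup_pair F F' n for F F' :: "('a::finite \<Rightarrow> 'a) set" and n +
  fixes v0 :: "'a list"
  assumes semiregular_F: "semiregular F" and orbits: "preserves_orbits F' F" and v0: "v0 \<in> V"
begin

abbreviation "K \<equiv> carrier (KFF_group F F' v0)"
abbreviation "HG \<equiv> H_group n v0"

lemma mem_K_iff:
  "g \<in> K \<longleftrightarrow> g \<in> tree_aut \<and> (\<forall>v\<in>V. local_perm g v \<in> F') \<and> finite {v \<in> V. local_perm g v \<notin> F}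
    \<and> g v0 = v0"
  by (auto simp: KFF_group_def GFF_def)

lemma id_in_K: "id \<in> K"
  using id_in_tree_aut F'_id F_id by (simp add: mem_K_iff)

lemma K_comp:
  assumes g: "g \<in> K" and h: "h \<in> K"
  shows "g \<circ> h \<in> K"
proof -
  have ga: "g \<in> tree_aut" and ha: "h \<in> tree_aut" using g h by (simp_all add: mem_K_iff)
  have "{v \<in> V. local_perm (g \<circ> h) v \<notin> F}
      \<subseteq> {v \<in> V. local_perm h v \<notin> F} \<union> aut_inv h ` {w \<in> V. local_perm g w \<notin> F}"
  proof
    fix v assume v: "v \<in> {v \<in> V. local_perm (g \<circ> h) v \<notin> F}"
    then have "local_perm h v \<notin> F \<or> local_perm g (h v) \<notin> F"
      using F_comp by (auto simp: local_perm_comp[OF ga ha])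
    moreover have "v = aut_inv h (h v)" and "h v \<in> V"
      using v ha by (simp_all add: tree_aut_in_tree_vertices)
    ultimately show "v \<in> {v \<in> V. local_perm h v \<notin> F} \<union> aut_inv h ` {w \<in> V. local_perm g w \<notin> F}"
      using v by blast
  qed
  then have "finite {v \<in> V. local_perm (g \<circ> h) v \<notin> F}"
    by (rule finite_subset) (use g h in \<open>simp add: mem_K_iff\<close>)
  with g h ga ha show ?thesis
    by (simp add: mem_K_iff local_perm_comp tree_aut_in_tree_vertices F'_comp tree_aut_comp)
qed

lemma aut_inv_in_K:
  assumes g: "g \<in> K"
  shows "aut_inv g \<in> K"
proof -
  have ga: "g \<in> tree_aut" using g by (simp add: mem_K_iff)
  have "{v \<in> V. local_perm (aut_inv g) v \<notin> F} \<subseteq> g ` {w \<in> V. local_perm g w \<notin> F}"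
  proof
    fix v assume v: "v \<in> {v \<in> V. local_perm (aut_inv g) v \<notin> F}"
    then have "local_perm g (aut_inv g v) \<notin> F"
      using F_perm_inv ga by (auto simp: local_perm_aut_inv_in_tree_vertices)
    moreover have "v = g (aut_inv g v)" and "aut_inv g v \<in> V"
      using v ga by (simp_all add: aut_inv_in_tree_vertices)
    ultimately show "v \<in> g ` {w \<in> V. local_perm g w \<notin> F}" by blast
  qed
  then have "finite {v \<in> V. local_perm (aut_inv g) v \<notin> F}"
    by (rule finite_subset) (use g in \<open>simp add: mem_K_iff\<close>)
  moreover have "aut_inv g v0 = v0" using g v0 aut_inv_left[OF ga v0] by (simp add: mem_K_iff)
  ultimately show ?thesis
    using g ga aut_inv_in_tree_aut[OF ga] F'_perm_inv
    by (simp add: mem_K_iff local_perm_aut_inv_in_tree_vertices aut_inv_in_tree_vertices)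
qed

definition embed :: "('a list \<Rightarrow> 'a list) \<Rightarrow> ('a list \<Rightarrow> nat \<Rightarrow> nat) \<times> ('a list \<Rightarrow> 'a list)" where
  "embed g = ((\<lambda>v. if v \<in> V then coset_perm (local_perm g (aut_inv g v)) else id), g)"

lemma embed_in_H_carrier:
  assumes g: "g \<in> K"
  shows "embed g \<in> H_carrier n v0"
proof -
  have ga: "g \<in> tree_aut" using g by (simp add: mem_K_iff)
  have F': "local_perm g (aut_inv g v) \<in> F'" if "v \<in> V" for v
    using g that ga by (simp add: mem_K_iff aut_inv_in_tree_vertices)
  have "{v \<in> V. fst (embed g) v 0 \<noteq> 0} \<subseteq> g ` {w \<in> V. local_perm g w \<notin> F}"
  proof
    fix v assume v: "v \<in> {v \<in> V. fst (embed g) v 0 \<noteq> 0}"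
    then have "v \<in> V" by simp
    with v have "coset_perm (local_perm g (aut_inv g v)) 0 \<noteq> 0" by (simp add: embed_def)
    then have "local_perm g (aut_inv g v) \<notin> F" using coset_perm_0_eq_0_iff[OF F'[OF \<open>v \<in> V\<close>]] by simp
    moreover have "v = g (aut_inv g v)" and "aut_inv g v \<in> V"
      using v ga by (simp_all add: aut_inv_in_tree_vertices)
    ultimately show "v \<in> g ` {w \<in> V. local_perm g w \<notin> F}" by blast
  qed
  then have "finite {v \<in> V. fst (embed g) v 0 \<noteq> 0}"
    by (rule finite_subset) (use g in \<open>simp add: mem_K_iff\<close>)
  moreover have "\<forall>v\<in>V. fst (embed g) v permutes {..<n}"
    using F' by (simp add: embed_def coset_perm_permutes)
  moreover have "\<forall>v. v \<notin> V \<longrightarrow> fst (embed g) v = id" by (simp add: embed_def)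
  ultimately have "(fst (embed g), g) \<in> H_carrier n v0"
    using g by (simp add: mem_H_carrier mem_K_iff)
  then show ?thesis by (simp add: embed_def)
qed

lemma embed_mult:
  assumes g: "g \<in> K" and h: "h \<in> K"
  shows "embed (g \<circ> h) = embed g \<otimes>\<^bsub>HG\<^esub> embed h"
proof -
  have ga: "g \<in> tree_aut" and ha: "h \<in> tree_aut" using g h by (simp_all add: mem_K_iff)
  have "coset_perm (local_perm (g \<circ> h) (aut_inv (g \<circ> h) v))
      = coset_perm (local_perm g (aut_inv g v)) \<circ> coset_perm (local_perm h (aut_inv h (aut_inv g v)))"
    if v: "v \<in> V" for v
  proof -
    define w where "w = aut_inv h (aut_inv g v)"
    have w: "w \<in> V" "h w = aut_inv g v"
      using ga ha v by (simp_all add: w_def aut_inv_in_tree_vertices)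
    then have "local_perm (g \<circ> h) w = local_perm g (aut_inv g v) \<circ> local_perm h w"
      using local_perm_comp[OF ga ha w(1)] by simp
    moreover have "local_perm g (aut_inv g v) \<in> F'" and "local_perm h w \<in> F'"
      using g h w ga v by (simp_all add: mem_K_iff aut_inv_in_tree_vertices)
    ultimately show ?thesis using coset_perm_comp by (simp add: aut_inv_comp[OF ga ha v] w_def)
  qed
  then show ?thesis
    by (auto simp: embed_def H_group_mult fun_eq_iff shift_act_in_tree_vertices shift_act_outside
        aut_inv_in_tree_vertices[OF ga])
qed

lemma embed_id: "embed id = \<one>\<^bsub>HG\<^esub>"
  by (auto simp: embed_def H_group_one fun_eq_iff)

lemma embed_hom: "embed \<in> hom (KFF_group F F' v0) HG"
  unfolding hom_def using embed_in_H_carrier embed_mult K_comp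
  by (auto simp: carrier_H_group KFF_group_def)

lemma inj_on_embed: "inj_on embed K"
  by (rule inj_onI) (simp add: embed_def)

lemma embed_m_inv:
  assumes g: "g \<in> K"
  shows "m_inv HG (embed g) = embed (aut_inv g)"
proof -
  have ga: "g \<in> tree_aut" using g by (simp add: mem_K_iff)
  have "embed g \<in> carrier HG" and "embed (aut_inv g) \<in> carrier HG"
    using embed_in_H_carrier g aut_inv_in_K by (simp_all add: carrier_H_group)
  moreover have "embed g \<otimes>\<^bsub>HG\<^esub> embed (aut_inv g) = \<one>\<^bsub>HG\<^esub>"
    using embed_mult[OF g aut_inv_in_K[OF g]] comp_aut_inv_self[OF ga] embed_id by simp
  moreover have "embed (aut_inv g) \<otimes>\<^bsub>HG\<^esub> embed g = \<one>\<^bsub>HG\<^esub>"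
    using embed_mult[OF aut_inv_in_K[OF g] g] aut_inv_comp_self[OF ga] embed_id by simp
  ultimately show ?thesis by (rule monoid.inv_unique'[OF monoid_H_group, symmetric])
qed

lemma subgroup_embed_image: "subgroup (embed ` K) HG"
proof
  show "embed ` K \<subseteq> carrier HG" using embed_in_H_carrier by (auto simp: carrier_H_group)
  show "x \<otimes>\<^bsub>HG\<^esub> y \<in> embed ` K" if "x \<in> embed ` K" "y \<in> embed ` K" for x y
    using that by (auto simp: embed_mult[symmetric] K_comp)
  show "\<one>\<^bsub>HG\<^esub> \<in> embed ` K" using id_in_K by (simp add: embed_id[symmetric])
  show "m_inv HG x \<in> embed ` K" if "x \<in> embed ` K" for x
    using that by (auto simp: embed_m_inv aut_inv_in_K)
qed

lemma coset_enum_meets_orbit: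
  assumes "i < n" and "p \<in> F'"
  shows "\<exists>f\<in>coset_enum i. f x = p x"
proof -
  obtain c where c: "c \<in> F'" "coset_enum i = right_coset c"
    using coset_enum_in_cosets[OF assms(1)] by (auto simp: cosets_def)
  obtain h1 h2 where h: "h1 \<in> F" "h2 \<in> F" "c x = h1 x" "p x = h2 x"
    using orbits c(1) assms(2) unfolding preserves_orbits_def by blast
  define f where "f = h2 \<circ> perm_inv h1 \<circ> c"
  have "f \<circ> perm_inv c = h2 \<circ> perm_inv h1"
    using bij_is_surj[OF F'_bij[OF c(1)]] by (simp add: f_def o_assoc[symmetric] surj_iff)
  then have "f \<in> coset_enum i" using c h mem_right_coset_iff F_comp F_perm_inv by simp
  moreover have "f x = p x" using h F_bij[OF h(1)] by (simp add: f_def bij_is_inj)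
  ultimately show ?thesis by blast
qed

subsection \<open>Discreteness\<close>

lemma openin_H_basic_open:
  "(\<sigma>, g) \<in> H_carrier n v0 \<Longrightarrow> finite S \<Longrightarrow> S \<subseteq> V \<Longrightarrow> openin (H_topology n v0) (H_basic_open n v0 \<sigma> g S)"
  unfolding H_topology_def by (rule topology_generated_by_Basis) blast

lemma K_eq_by_star_and_cosets:
  assumes g: "g \<in> K" and h: "h \<in> K" and "h v0 = g v0" and "\<And>a. h (nbr a v0) = g (nbr a v0)"
    and coord: "\<And>v. v \<in> V \<Longrightarrow> fst (embed h) v 0 = fst (embed g) v 0"
  shows "g = h"
proof -
  have ga: "g \<in> tree_aut" and ha: "h \<in> tree_aut" using g h by (simp_all add: mem_K_iff)
  have "g v0 = h v0" using assms(3) by simp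
  moreover have "local_perm g v0 = local_perm h v0"
  proof
    fix a
    have "nbr (local_perm g v0 a) (g v0) = nbr (local_perm h v0 a) (g v0)"
      using assms(3) assms(4)[of a] by (simp add: tree_aut_nbr[OF ga v0] tree_aut_nbr[OF ha v0])
    then show "local_perm g v0 a = local_perm h v0 a" by simp
  qed
  moreover have "\<exists>f\<in>F. local_perm h w = local_perm g w \<circ> f" if w: "w \<in> V" and "g w = h w" for w
  proof (rule coset_perm_0_eqD)
    show "local_perm g w \<in> F'" and "local_perm h w \<in> F'"
      using g h w by (simp_all add: mem_K_iff)
    show "coset_perm (local_perm g w) 0 = coset_perm (local_perm h w) 0"
      using coord[OF tree_aut_in_tree_vertices[OF ha w]] \<open>g w = h w\<close>
        aut_inv_left[OF ha w] aut_inv_left[OF ga w] tree_aut_in_tree_vertices[OF ha w]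
      by (simp add: embed_def)
  qed
  ultimately show "g = h" by (rule tree_aut_eq_by_semiregular[OF semiregular_F ga ha v0])
qed

lemma embed_image_discrete:
  assumes "x \<in> embed ` K"
  shows "\<exists>U. openin (H_topology n v0) U \<and> U \<inter> embed ` K = {x}"
proof -
  obtain g where g: "g \<in> K" and x: "x = embed g" using assms by blast
  define S where "S = insert v0 (range (\<lambda>a. nbr a v0))"
  have S: "finite S" "S \<subseteq> V" using v0 by (auto simp: S_def)
  define \<sigma> where "\<sigma> = fst (embed g)"
  have x\<sigma>: "x = (\<sigma>, g)" by (simp add: x \<sigma>_def embed_def)
  have carrier: "(\<sigma>, g) \<in> H_carrier n v0" using embed_in_H_carrier[OF g] x x\<sigma> by simp
  define U where "U = H_basic_open n v0 \<sigma> g S"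
  have "openin (H_topology n v0) U" unfolding U_def by (rule openin_H_basic_open[OF carrier S])
  moreover have "U \<inter> embed ` K = {x}"
  proof
    show "{x} \<subseteq> U \<inter> embed ` K"
      using g x carrier by (auto simp: x\<sigma> U_def H_basic_open_def)
    show "U \<inter> embed ` K \<subseteq> {x}"
    proof
      fix y assume y: "y \<in> U \<inter> embed ` K"
      then obtain h where h: "h \<in> K" and yh: "y = embed h" by blast
      have "(fst (embed h), h) \<in> U" using y by (simp add: yh embed_def)
      then have "\<forall>v\<in>V. fst (embed h) v 0 = fst (embed g) v 0" and "\<forall>v\<in>S. h v = g v"
        by (simp_all add: U_def H_basic_open_def \<sigma>_def)
      then have "g = h" by (intro K_eq_by_star_and_cosets[OF g h]) (simp_all add: S_def)
      then show "y \<in> {x}" by (simp add: x yh)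
    qed
  qed
  ultimately show ?thesis by blast
qed

subsection \<open>Cocompactness\<close>

lemma exists_coset_choice:
  assumes j: "\<And>v. j v < n"
  obtains ch where "\<And>w a b. bij (ch w a b)" and "\<And>w a b. ch w a b a = b"
    and "\<And>w a b. \<exists>f\<in>coset_enum (j w). f a = b \<Longrightarrow> ch w a b \<in> coset_enum (j w)"
proof -
  define ch where "ch w a b = (if \<exists>f\<in>coset_enum (j w). f a = b
    then SOME f. f \<in> coset_enum (j w) \<and> f a = b else redirect id a b)" for w a b
  have some: "ch w a b \<in> coset_enum (j w) \<and> ch w a b a = b" if "\<exists>f\<in>coset_enum (j w). f a = b" for w a b
    using someI_ex[of "\<lambda>f. f \<in> coset_enum (j w) \<and> f a = b"] that by (simp add: ch_def Bex_def)
  have "bij (ch w a b)" and "ch w a b a = b" for w a b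
    using some[of w a b] coset_enum_subset[OF j] F'_bij
    by (auto simp: ch_def bij_redirect redirect_apply)
  moreover have "ch w a b \<in> coset_enum (j w)" if "\<exists>f\<in>coset_enum (j w). f a = b" for w a b
    using some that by blast
  ultimately show thesis by (rule that)
qed

lemma exists_K_with_local_cosets:
  assumes j: "\<And>v. j v < n" and fin: "finite {v \<in> V. j v \<noteq> 0}"
  shows "\<exists>\<gamma>\<in>K. \<forall>v\<in>V. local_perm \<gamma> v \<in> coset_enum (j v)"
proof -
  obtain r where r: "r \<in> coset_enum (j v0)" using coset_enum_meets_orbit[OF j F'_id, of v0] by blast
  obtain ch where bij_ch: "\<And>w a b. bij (ch w a b)" and ch_apply: "\<And>w a b. ch w a b a = b"
    and ch: "\<And>w a b. \<exists>f\<in>coset_enum (j w). f a = b \<Longrightarrow> ch w a b \<in> coset_enum (j w)"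
    using exists_coset_choice[of j, OF j] by blast
  interpret extension_data r ch v0
  proof
    show "bij r" using r coset_enum_subset[OF j] F'_bij by blast
  qed (simp_all add: bij_ch ch_apply v0)
  have L: "L w \<in> coset_enum (j (walk v0 w))" if "w \<in> V" for w
    using that
  proof (induction w)
    case (Cons a w)
    then have "L w \<in> coset_enum (j (walk v0 w))" by (simp add: Cons_in_tree_vertices)
    then have "\<exists>f\<in>coset_enum (j (walk v0 (a # w))). f a = L w a"
      using coset_enum_meets_orbit[OF j] coset_enum_subset[OF j] by blast
    then show ?case using ch by simp
  qed (simp add: r)
  have local: "local_perm Ext v \<in> coset_enum (j v)" if "v \<in> V" for v
    using L[OF walk_in_tree_vertices[OF rev_in_tree_vertices[OF v0], of v]] walk_walk_rev[OF v0 that]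
    by (simp add: local_perm_extension that)
  have "{v \<in> V. local_perm Ext v \<notin> F} \<subseteq> {v \<in> V. j v \<noteq> 0}"
  proof (intro subsetI CollectI conjI)
    fix v assume "v \<in> {v \<in> V. local_perm Ext v \<notin> F}"
    then have "v \<in> V" and "local_perm Ext v \<notin> F" by simp_all
    then show "v \<in> V" and "j v \<noteq> 0" using local[of v] coset_enum(2) by (metis, metis)
  qed
  then have "finite {v \<in> V. local_perm Ext v \<notin> F}" using fin by (rule finite_subset)
  moreover have "local_perm Ext v \<in> F'" if "v \<in> V" for v
    using local[OF that] coset_enum_subset[OF j] by blast
  ultimately have "Ext \<in> K" by (simp add: mem_K_iff extension_in_tree_aut)
  with local show ?thesis by blast
qed

definition H_compact :: "(('a list \<Rightarrow> nat \<Rightarrow> nat) \<times> ('a list \<Rightarrow> 'a list)) set" where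
  "H_compact = {(\<tau>, k) \<in> H_carrier n v0. \<forall>v\<in>V. \<tau> v 0 = 0}"

lemma H_carrier_zero_preimages:
  assumes x: "(\<tau>, k) \<in> H_carrier n v0"
  obtains j where "\<And>w. j w < n" and "\<And>w. w \<in> V \<Longrightarrow> \<tau> (k w) (j w) = 0"
    and "finite {w \<in> V. j w \<noteq> 0}"
proof -
  have k: "k \<in> tree_aut" using x by (simp add: mem_H_carrier)
  have perm: "bij_betw (\<tau> (k w)) {..<n} {..<n}" if "w \<in> V" for w
    using x that tree_aut_in_tree_vertices[OF k] by (simp add: mem_H_carrier permutes_imp_bij)
  then have zero_in: "0 \<in> \<tau> (k w) ` {..<n}" if "w \<in> V" for w
    using that n_pos by (simp add: bij_betw_def)
  define j where "j w = (if w \<in> V then inv_into {..<n} (\<tau> (k w)) 0 else 0)" for w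
  have "j w < n" for w
    using inv_into_into[OF zero_in] n_pos by (simp add: j_def)
  moreover have "\<tau> (k w) (j w) = 0" if "w \<in> V" for w
    using f_inv_into_f[OF zero_in[OF that]] that by (simp add: j_def)
  moreover have "{w \<in> V. j w \<noteq> 0} \<subseteq> aut_inv k ` {u \<in> V. \<tau> u 0 \<noteq> 0}"
  proof
    fix w assume w: "w \<in> {w \<in> V. j w \<noteq> 0}"
    have "\<tau> (k w) 0 \<noteq> 0"
    proof
      assume "\<tau> (k w) 0 = 0"
      then have "j w = 0"
        using w n_pos inv_into_f_eq[OF bij_betw_imp_inj_on[OF perm]] by (simp add: j_def)
      with w show False by simp
    qed
    moreover have "w = aut_inv k (k w)" and "k w \<in> V"
      using w k by (simp_all add: tree_aut_in_tree_vertices)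
    ultimately show "w \<in> aut_inv k ` {u \<in> V. \<tau> u 0 \<noteq> 0}" by blast
  qed
  then have "finite {w \<in> V. j w \<noteq> 0}"
    by (rule finite_subset) (use x in \<open>simp add: mem_H_carrier\<close>)
  ultimately show thesis by (rule that)
qed

lemma fst_mult_embed_aut_inv:
  assumes "\<gamma> \<in> K" and "k \<in> tree_aut" and "v \<in> V"
  shows "fst ((\<tau>, k) \<otimes>\<^bsub>HG\<^esub> embed (aut_inv \<gamma>)) v
    = \<tau> v \<circ> coset_perm (perm_inv (local_perm \<gamma> (aut_inv k v)))"
proof -
  have \<gamma>: "\<gamma> \<in> tree_aut" and w: "aut_inv k v \<in> V"
    using assms by (simp_all add: mem_K_iff aut_inv_in_tree_vertices)
  have "local_perm (aut_inv \<gamma>) (aut_inv (aut_inv \<gamma>) (aut_inv k v)) = perm_inv (local_perm \<gamma> (aut_inv k v))"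
    using aut_inv_aut_inv[OF \<gamma> w] local_perm_aut_inv[OF \<gamma> w] by simp
  with assms(3) w show ?thesis
    by (simp add: embed_def H_group_mult shift_act_in_tree_vertices)
qed

lemma mult_embed_aut_inv_embed:
  assumes "x \<in> carrier HG" and "\<gamma> \<in> K"
  shows "x \<otimes>\<^bsub>HG\<^esub> embed (aut_inv \<gamma>) \<otimes>\<^bsub>HG\<^esub> embed \<gamma> = x"
proof -
  have "embed (aut_inv \<gamma>) \<in> carrier HG" and "embed \<gamma> \<in> carrier HG"
    using embed_in_H_carrier assms(2) aut_inv_in_K by (simp_all add: carrier_H_group)
  then have "x \<otimes>\<^bsub>HG\<^esub> embed (aut_inv \<gamma>) \<otimes>\<^bsub>HG\<^esub> embed \<gamma>
      = x \<otimes>\<^bsub>HG\<^esub> (embed (aut_inv \<gamma>) \<otimes>\<^bsub>HG\<^esub> embed \<gamma>)"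
    using assms(1) by (simp add: monoid.m_assoc[OF monoid_H_group])
  also have "embed (aut_inv \<gamma>) \<otimes>\<^bsub>HG\<^esub> embed \<gamma> = \<one>\<^bsub>HG\<^esub>"
    using embed_mult[OF aut_inv_in_K[OF assms(2)] assms(2), symmetric] embed_id assms(2)
    by (simp add: aut_inv_comp_self mem_K_iff)
  finally show ?thesis using monoid.r_one[OF monoid_H_group assms(1)] by simp
qed

lemma H_carrier_decomp:
  assumes x: "(\<tau>, k) \<in> H_carrier n v0"
  shows "\<exists>c\<in>H_compact. \<exists>\<gamma>\<in>K. (\<tau>, k) = c \<otimes>\<^bsub>HG\<^esub> embed \<gamma>"
proof -
  have k: "k \<in> tree_aut" using x by (simp add: mem_H_carrier)
  obtain j where j: "\<And>w. j w < n" and \<tau>_j: "\<And>w. w \<in> V \<Longrightarrow> \<tau> (k w) (j w) = 0"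
    and "finite {w \<in> V. j w \<noteq> 0}"
    using H_carrier_zero_preimages[OF x] by blast
  then obtain \<gamma> where \<gamma>: "\<gamma> \<in> K" and local: "\<forall>v\<in>V. local_perm \<gamma> v \<in> coset_enum (j v)"
    using exists_K_with_local_cosets by blast
  define c where "c = (\<tau>, k) \<otimes>\<^bsub>HG\<^esub> embed (aut_inv \<gamma>)"
  have "fst c v 0 = 0" if v: "v \<in> V" for v
  proof -
    have w: "aut_inv k v \<in> V" "k (aut_inv k v) = v" using v k by (simp_all add: aut_inv_in_tree_vertices)
    then have "coset_perm (perm_inv (local_perm \<gamma> (aut_inv k v))) 0 = j (aut_inv k v)"
      using local j by (simp add: coset_perm_perm_inv_0)
    then show ?thesis
      using fst_mult_embed_aut_inv[OF \<gamma> k v] \<tau>_j[OF w(1)] w(2) by (simp add: c_def)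
  qed
  moreover have "c \<in> H_carrier n v0"
    using monoid.m_closed[OF monoid_H_group] x embed_in_H_carrier[OF aut_inv_in_K[OF \<gamma>]]
    by (simp add: c_def carrier_H_group)
  ultimately have "c \<in> H_compact" by (cases c) (simp add: H_compact_def)
  moreover have "(\<tau>, k) = c \<otimes>\<^bsub>HG\<^esub> embed \<gamma>"
    using mult_embed_aut_inv_embed[of "(\<tau>, k)" \<gamma>] x \<gamma> by (simp add: c_def carrier_H_group)
  ultimately show ?thesis using \<gamma> by blast
qed

lemma H_eq_compact_times_lattice:
  "carrier HG = {c \<otimes>\<^bsub>HG\<^esub> \<gamma> | c \<gamma>. c \<in> H_compact \<and> \<gamma> \<in> embed ` K}"
proof
  show "carrier HG \<subseteq> {c \<otimes>\<^bsub>HG\<^esub> \<gamma> | c \<gamma>. c \<in> H_compact \<and> \<gamma> \<in> embed ` K}"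
  proof
    fix x assume "x \<in> carrier HG"
    then obtain \<tau> k where "x = (\<tau>, k)" "(\<tau>, k) \<in> H_carrier n v0"
      by (cases x) (simp add: carrier_H_group)
    with H_carrier_decomp show "x \<in> {c \<otimes>\<^bsub>HG\<^esub> \<gamma> | c \<gamma>. c \<in> H_compact \<and> \<gamma> \<in> embed ` K}"
      by blast
  qed
  show "{c \<otimes>\<^bsub>HG\<^esub> \<gamma> | c \<gamma>. c \<in> H_compact \<and> \<gamma> \<in> embed ` K} \<subseteq> carrier HG"
  proof
    fix y assume "y \<in> {c \<otimes>\<^bsub>HG\<^esub> \<gamma> | c \<gamma>. c \<in> H_compact \<and> \<gamma> \<in> embed ` K}"
    then obtain c \<gamma> where y: "y = c \<otimes>\<^bsub>HG\<^esub> \<gamma>" and c: "c \<in> H_compact" and \<gamma>: "\<gamma> \<in> embed ` K"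
      by blast
    have "c \<in> carrier HG" using c by (auto simp: H_compact_def carrier_H_group)
    moreover have "\<gamma> \<in> carrier HG" using \<gamma> embed_in_H_carrier by (auto simp: carrier_H_group)
    ultimately show "y \<in> carrier HG" by (simp add: y monoid.m_closed[OF monoid_H_group])
  qed
qed

text \<open>\<open>H_compact\<close> is a continuous image of the compact space of all families of local data
  (a permutation of \<open>\<Sigma>\<^sub>n\<close> fixing \<open>0\<close> and a permutation of \<open>\<Omega>\<close> at each vertex).\<close>

definition local_data :: "((nat \<Rightarrow> nat) \<times> ('a \<Rightarrow> 'a)) set" where
  "local_data = {p. p permutes {..<n} \<and> p 0 = 0} \<times> {q. bij q}"

definition data_space :: "('a list \<Rightarrow> (nat \<Rightarrow> nat) \<times> ('a \<Rightarrow> 'a)) topology" where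
  "data_space = product_topology (\<lambda>v. discrete_topology local_data) V"

definition perm_or_id :: "('a list \<Rightarrow> 'a \<Rightarrow> 'a) \<Rightarrow> 'a list \<Rightarrow> 'a \<Rightarrow> 'a" where
  "perm_or_id q w = (if bij (q w) then q w else id)"

abbreviation redirect_data :: "('a list \<Rightarrow> 'a \<Rightarrow> 'a) \<Rightarrow> 'a list \<Rightarrow> 'a \<Rightarrow> 'a \<Rightarrow> 'a \<Rightarrow> 'a" where
  "redirect_data q \<equiv> \<lambda>w a b. redirect (perm_or_id q w) a b"

text \<open>The local permutation of \<open>aut_of_perms q\<close> at \<open>w\<close> is \<open>q w\<close>, corrected by a transposition
  where \<open>q w\<close> does not fit the edge towards \<open>v0\<close>; the guard \<open>perm_or_id\<close> makes it an
  automorphism for every \<open>q\<close>.\<close>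

definition aut_of_perms :: "('a list \<Rightarrow> 'a \<Rightarrow> 'a) \<Rightarrow> 'a list \<Rightarrow> 'a list" where
  "aut_of_perms q = extension (perm_or_id q v0) (redirect_data q) v0"

definition assemble ::
  "('a list \<Rightarrow> (nat \<Rightarrow> nat) \<times> ('a \<Rightarrow> 'a)) \<Rightarrow> ('a list \<Rightarrow> nat \<Rightarrow> nat) \<times> ('a list \<Rightarrow> 'a list)"
where
  "assemble z = ((\<lambda>v. if v \<in> V then fst (z v) else id), aut_of_perms (\<lambda>w. snd (z w)))"

lemma extension_data_perms: "extension_data (perm_or_id q v0) (redirect_data q) v0"
  by unfold_locales (simp_all add: perm_or_id_def bij_redirect redirect_apply v0)

lemma aut_of_perms_in_tree_aut: "aut_of_perms q \<in> tree_aut"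
  unfolding aut_of_perms_def by (rule extension_data.extension_in_tree_aut[OF extension_data_perms])

lemma aut_of_perms_base: "aut_of_perms q v0 = v0"
  unfolding aut_of_perms_def by (rule extension_data.extension_base[OF extension_data_perms])

lemma topspace_data_space: "topspace data_space = (\<Pi>\<^sub>E v\<in>V. local_data)"
  by (simp add: data_space_def)

lemma compact_space_data_space: "compact_space data_space"
proof -
  have "finite {p. p permutes {..<n} \<and> p 0 = (0::nat)}"
    by (rule finite_subset[OF _ finite_permutations[of "{..<n}"]]) auto
  then have "finite local_data" by (simp add: local_data_def)
  then show ?thesis
    by (simp add: data_space_def compact_space_product_topology compact_space_discrete_topology)
qed

lemma assemble_in_H_compact:
  assumes "z \<in> topspace data_space"
  shows "assemble z \<in> H_compact"
proof -
  have z: "fst (z v) permutes {..<n} \<and> fst (z v) 0 = 0" if "v \<in> V" for v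
    using assms that by (auto simp: topspace_data_space local_data_def PiE_def Pi_def)
  then have "{v \<in> V. (if v \<in> V then fst (z v) else id) 0 \<noteq> 0} = {}" by auto
  with z show ?thesis
    by (simp add: assemble_def H_compact_def mem_H_carrier aut_of_perms_in_tree_aut aut_of_perms_base)
qed

lemma H_compact_subset_assemble_image: "H_compact \<subseteq> assemble ` topspace data_space"
proof
  fix x assume "x \<in> H_compact"
  then obtain \<tau> k where x: "x = (\<tau>, k)" and carrier: "(\<tau>, k) \<in> H_carrier n v0"
    and \<tau>0: "\<forall>v\<in>V. \<tau> v 0 = 0"
    by (auto simp: H_compact_def)
  have k: "k \<in> tree_aut" "k v0 = v0" using carrier by (simp_all add: mem_H_carrier)
  define z where "z v = (if v \<in> V then (\<tau> v, local_perm k v) else undefined)" for v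
  have z: "z \<in> topspace data_space"
    using carrier \<tau>0 bij_local_perm[OF k(1)]
    by (auto simp: topspace_data_space z_def local_data_def mem_H_carrier)
  define q where "q = (\<lambda>w. snd (z w))"
  have q: "perm_or_id q w = local_perm k w" if "w \<in> V" for w
    using that bij_local_perm[OF k(1) that] by (simp add: perm_or_id_def q_def z_def)
  interpret extension_data "perm_or_id q v0" "redirect_data q" v0 by (rule extension_data_perms)
  have L: "L w = local_perm k (walk v0 w)" if "w \<in> V" for w
    using that
  proof (induction w)
    case (Cons a w)
    then have "L w = local_perm k (walk v0 w)" by (simp add: Cons_in_tree_vertices)
    moreover have "local_perm k (nbr a (walk v0 w)) a = local_perm k (walk v0 w) a"
      using local_perm_nbr_same[OF k(1)] v0 by simp
    ultimately show ?case using q[of "walk v0 (a # w)"] v0 by (simp add: redirect_eq_self)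
  qed (simp add: q v0)
  have "aut_of_perms q = k"
  proof (rule tree_aut_eq_by_local_perm[OF aut_of_perms_in_tree_aut k(1) v0])
    show "aut_of_perms q v0 = k v0" by (simp add: aut_of_perms_base k(2))
    fix w :: "'a list" assume w: "w \<in> V"
    have "walk (rev v0) w \<in> V" using v0 by (simp add: rev_in_tree_vertices)
    then show "local_perm (aut_of_perms q) w = local_perm k w"
      using L walk_walk_rev[OF v0 w] by (simp add: aut_of_perms_def local_perm_extension w)
  qed
  moreover have "(\<lambda>v. if v \<in> V then fst (z v) else id) = \<tau>"
    using carrier by (auto simp: z_def mem_H_carrier)
  ultimately have "assemble z = x" by (simp add: assemble_def x q_def)
  with z show "x \<in> assemble ` topspace data_space" by blast
qed

lemma assemble_image: "assemble ` topspace data_space = H_compact"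
  using assemble_in_H_compact H_compact_subset_assemble_image by blast

lemma extension_perms_cong:
  assumes "\<And>i. q (walk v0 (drop i w)) = q' (walk v0 (drop i w))"
  shows "extension_perm (perm_or_id q v0) (redirect_data q) v0 w
       = extension_perm (perm_or_id q' v0) (redirect_data q') v0 w
    \<and> extension_word (perm_or_id q v0) (redirect_data q) v0 w
       = extension_word (perm_or_id q' v0) (redirect_data q') v0 w"
  using assms
proof (induction w)
  case Nil
  then show ?case using Nil[of 0] by (simp add: perm_or_id_def)
next
  case (Cons a w)
  have "q (walk v0 (drop i w)) = q' (walk v0 (drop i w))" for i
    using Cons.prems[of "Suc i"] by simp
  moreover have "perm_or_id q (walk v0 (a # w)) = perm_or_id q' (walk v0 (a # w))"
    using Cons.prems[of 0] by (simp add: perm_or_id_def)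
  ultimately show ?case using Cons.IH by simp
qed

definition geodesic :: "'a list \<Rightarrow> 'a list set" where
  "geodesic v = (\<lambda>i. walk v0 (drop i (walk (rev v0) v))) ` {..length (walk (rev v0) v)}"

lemma finite_geodesic: "finite (geodesic v)"
  by (simp add: geodesic_def)

lemma geodesic_subset: "geodesic v \<subseteq> V"
  using v0 by (auto simp: geodesic_def)

lemma walk_drop_in_geodesic: "walk v0 (drop i (walk (rev v0) v)) \<in> geodesic v"
  unfolding geodesic_def
  by (cases "i \<le> length (walk (rev v0) v)") (auto intro: rev_image_eqI[of "length (walk (rev v0) v)"])

lemma aut_of_perms_cong:
  assumes "v \<in> V" and "\<And>w. w \<in> geodesic v \<Longrightarrow> q w = q' w"
  shows "aut_of_perms q v = aut_of_perms q' v"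
  using extension_perms_cong[of q "walk (rev v0) v" q'] assms walk_drop_in_geodesic
  by (simp add: aut_of_perms_def extension_def)

lemma assemble_agree:
  assumes "v \<in> V" and "\<And>w. w \<in> insert v (geodesic v) \<Longrightarrow> z w = z' w"
  shows "fst (assemble z) v = fst (assemble z') v" and "snd (assemble z) v = snd (assemble z') v"
  using assms aut_of_perms_cong[OF assms(1), of "\<lambda>w. snd (z w)" "\<lambda>w. snd (z' w)"]
  by (simp_all add: assemble_def)

lemma assemble_in_basic_open:
  assumes z0U: "assemble z0 \<in> H_basic_open n v0 \<sigma> g S" and "S \<subseteq> V"
    and z: "z \<in> topspace data_space" and z0: "z0 \<in> topspace data_space"
    and agree: "\<And>w. w \<in> S \<union> (\<Union>v\<in>S. geodesic v) \<Longrightarrow> z w = z0 w"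
  shows "assemble z \<in> H_basic_open n v0 \<sigma> g S"
proof -
  have "assemble z \<in> H_compact" and "assemble z0 \<in> H_compact"
    using assemble_in_H_compact z z0 by auto
  moreover have "fst (assemble z) v = \<sigma> v \<and> snd (assemble z) v = g v" if v: "v \<in> S" for v
  proof -
    have "fst (assemble z) v = fst (assemble z0) v" and "snd (assemble z) v = snd (assemble z0) v"
      using assemble_agree agree v \<open>S \<subseteq> V\<close> by blast+
    moreover have "fst (assemble z0) v = \<sigma> v \<and> snd (assemble z0) v = g v"
      using z0U v by (cases "assemble z0") (auto simp: H_basic_open_def)
    ultimately show ?thesis by simp
  qed
  ultimately show ?thesis
    using z0U by (auto simp: H_basic_open_def H_compact_def)
qed

lemma openin_data_space_cylinder:
  assumes "z0 \<in> topspace data_space" and "finite D" and "D \<subseteq> V"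
  shows "openin data_space (\<Pi>\<^sub>E v\<in>V. if v \<in> D then {z0 v} else local_data)"
  unfolding data_space_def
  by (rule product_topology_basis)
    (use assms in \<open>auto simp: topspace_data_space PiE_def Pi_def intro: finite_subset\<close>)

lemma continuous_map_assemble: "continuous_map data_space (H_topology n v0) assemble"
  unfolding H_topology_def
proof (rule continuous_on_generated_topo)
  let ?B = "{H_basic_open n v0 \<sigma> g S | \<sigma> g S. (\<sigma>, g) \<in> H_carrier n v0 \<and> finite S \<and> S \<subseteq> V}"
  show "assemble ` topspace data_space \<subseteq> \<Union> ?B"
  proof
    fix y assume "y \<in> assemble ` topspace data_space"
    then obtain \<sigma> g where y: "y = (\<sigma>, g)" and carrier: "(\<sigma>, g) \<in> H_carrier n v0"
      using assemble_image by (cases y) (auto simp: H_compact_def)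
    then have "y \<in> H_basic_open n v0 \<sigma> g {}" by (simp add: H_basic_open_def)
    with carrier show "y \<in> \<Union> ?B" by blast
  qed
next
  fix U assume "U \<in> {H_basic_open n v0 \<sigma> g S | \<sigma> g S. (\<sigma>, g) \<in> H_carrier n v0 \<and> finite S \<and> S \<subseteq> V}"
  then obtain \<sigma> g S where U: "U = H_basic_open n v0 \<sigma> g S" and S: "finite S" "S \<subseteq> V"
    by blast
  show "openin data_space (assemble -` U \<inter> topspace data_space)"
  proof (subst openin_subopen, intro ballI)
    fix z0 assume z0: "z0 \<in> assemble -` U \<inter> topspace data_space"
    define D where "D = S \<union> (\<Union>v\<in>S. geodesic v)"
    define T where "T = (\<Pi>\<^sub>E v\<in>V. if v \<in> D then {z0 v} else local_data)"
    have D: "finite D" "D \<subseteq> V" using S finite_geodesic geodesic_subset by (auto simp: D_def)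
    with z0 have "openin data_space T" unfolding T_def by (simp add: openin_data_space_cylinder)
    moreover have "z0 \<in> T" using z0 by (auto simp: T_def topspace_data_space PiE_def Pi_def)
    moreover have "T \<subseteq> assemble -` U \<inter> topspace data_space"
    proof
      fix z assume z: "z \<in> T"
      have "z \<in> topspace data_space"
        using z z0 by (auto simp: T_def topspace_data_space PiE_def Pi_def split: if_splits)
      moreover have "z w = z0 w" if "w \<in> D" for w using z that D by (auto simp: T_def PiE_def Pi_def)
      ultimately show "z \<in> assemble -` U \<inter> topspace data_space"
        using assemble_in_basic_open[of z0 \<sigma> g S z] z0 S by (simp add: U D_def)
    qed
    ultimately show "\<exists>T. openin data_space T \<and> z0 \<in> T \<and> T \<subseteq> assemble -` U \<inter> topspace data_space"
      by blast
  qed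
qed

lemma compactin_H_compact: "compactin (H_topology n v0) H_compact"
  using image_compactin[OF compact_space_data_space[unfolded compact_space_def] continuous_map_assemble]
  by (simp add: assemble_image)

end

theorem proposition3:
  fixes F F' :: "('a::finite \<Rightarrow> 'a) set" and v0 :: "'a list" and n :: nat
  assumes "CARD('a) \<ge> 3"
    and "subgroup F (BijGroup (UNIV :: 'a set))"
    and "subgroup F' (BijGroup (UNIV :: 'a set))"
    and "F \<subseteq> F'"
    and "semiregular F"
    and "preserves_orbits F' F"
    and "n = card (rcosets\<^bsub>(BijGroup (UNIV :: 'a set))\<lparr>carrier := F'\<rparr>\<^esub> F)"
    and "v0 \<in> tree_vertices"
  shows "\<exists>\<phi>. \<phi> \<in> hom (KFF_group F F' v0) (H_group n v0)
           \<and> inj_on \<phi> (carrier (KFF_group F F' v0))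
           \<and> cocompact_lattice (H_group n v0) (H_topology n v0) (\<phi> ` carrier (KFF_group F F' v0))"
proof -
  interpret lattice_setting F F' n v0
    using assms(2-8) by (simp add: lattice_setting_def subgroup_pair_def lattice_setting_axioms_def)
  have "cocompact_lattice (H_group n v0) (H_topology n v0) (embed ` K)"
    unfolding cocompact_lattice_def
    using subgroup_embed_image embed_image_discrete compactin_H_compact H_eq_compact_times_lattice
    by blast
  with embed_hom inj_on_embed show ?thesis by blast
qed

end
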